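(* Let $(M,d)$ be a complete pointed metric space and let $\mu$ be a positive Radon measure on $\beta\widetilde{M}$. The following are equivalent: (i) $\mu$ is $\preccurlyeq$-minimal; (ii) for every $f\in C(\beta\widetilde{M})$ that is constant on every fibre of $q$, $\int f\,d\mu=\inf\{\int g\,d\mu: g\in G,\ f\le g\}$; (iii) for every upper semicontinuous $f:\beta\widetilde{M}\to\mathbb{R}$ that is constant on every fibre of $q$, $\int_{\beta\widetilde{M}} f\,d\mu=\inf\{\int g\,d\mu: g\in G,\ f\le g\}$; (iv) for every Borel set $A\subset\widetilde{M}^G$ such that $\mu$ is concentrated on $q^{-1}(A)$ and every upper semicontinuous $f:\beta\widetilde{M}\to\mathbb{R}$ that is constant on every fibre of $q$ included in $q^{-1}(A)$, $\int_{\beta\widetilde{M}} f\,d\mu=\inf\{\int g\,d\mu: g\in G,\ f\le g\}$.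
   Context: $\widetilde{M}=\{(x,y)\in M\times M:x\ne y\}$, $\beta\widetilde{M}$ is its Stone–Čech compactification, and Radon measures on $\beta\widetilde{M}$ are identified with $C(\beta\widetilde{M})^*$; for $x\ne y$ in $M$, $d(x,y)$ is the metric and $g(x,y)$ denotes the value of $g\in C(\beta\widetilde{M})$ at $(x,y)\in\widetilde{M}\subset\beta\widetilde{M}$. $G$ is the set of $g\in C(\beta\widetilde{M})$ such that $d(x,y)g(x,y)\le d(x,u)g(x,u)+d(u,y)g(u,y)$ for all distinct $x,u,y\in M$. For positive Radon measures $\mu,\nu$, $\mu\preccurlyeq\nu$ iff $\int g\,d\mu\le\int g\,d\nu$ for all $g\in G$; $\mu$ is $\preccurlyeq$-minimal if every positive $\nu$ with $\nu\preccurlyeq\mu$ satisfies $\mu\preccurlyeq\nu$. Define the equivalence relation $\zeta\sim\omega$ on $\beta\widetilde{M}$ by $g(\zeta)=g(\omega)$ for all $g\in G$; $\widetilde{M}^G=\beta\widetilde{M}/\!\sim$ with the quotient topology (a compact Hausdorff space) and $q:\beta\widetilde{M}\to\widetilde{M}^G$ the quotient map. Throughout, $M$ has at least three distinct points. *)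

theory Defs
  imports "HOL-Analysis.Analysis"
begin

definition Mtilde :: "'a::metric_space set \<Rightarrow> ('a \<times> 'a) set" where
  "Mtilde M = {(x, y). x \<in> M \<and> y \<in> M \<and> x \<noteq> y}"

definition stone_cech :: "'x topology \<Rightarrow> 'b topology \<Rightarrow> ('x \<Rightarrow> 'b) \<Rightarrow> bool" where
  "stone_cech X T e \<longleftrightarrow>
     compact_space T \<and> Hausdorff_space T \<and> embedding_map X T e \<and>
     T closure_of (e ` topspace X) = topspace T \<and>
     (\<forall>f. continuous_map X euclideanreal f \<and> (\<exists>B. \<forall>x\<in>topspace X. \<bar>f x\<bar> \<le> B) \<longrightarrow>
          (\<exists>h. continuous_map T euclideanreal h \<and> (\<forall>x\<in>topspace X. h (e x) = f x)))"

definition Cfun :: "'b topology \<Rightarrow> ('b \<Rightarrow> real) set" where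
  "Cfun T = {g. continuous_map T euclideanreal g}"

definition Gset :: "'a::metric_space set \<Rightarrow> 'b topology \<Rightarrow> ('a \<times> 'a \<Rightarrow> 'b) \<Rightarrow> ('b \<Rightarrow> real) set" where
  "Gset M T e = {g \<in> Cfun T. \<forall>x\<in>M. \<forall>u\<in>M. \<forall>y\<in>M. x \<noteq> u \<and> u \<noteq> y \<and> x \<noteq> y \<longrightarrow>
      dist x y * g (e (x, y)) \<le> dist x u * g (e (x, u)) + dist u y * g (e (u, y))}"

definition borel_sets_of :: "'b topology \<Rightarrow> 'b set set" where
  "borel_sets_of T = sigma_sets (topspace T) {U. openin T U}"

text \<open>Positive Radon measures on a compact Hausdorff space T: finite Borel measures,
  inner regular by compact sets (for finite measures this implies outer regularity).\<close>
definition radon_measure :: "'b topology \<Rightarrow> 'b measure \<Rightarrow> bool" where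
  "radon_measure T \<mu> \<longleftrightarrow>
     space \<mu> = topspace T \<and> sets \<mu> = borel_sets_of T \<and> finite_measure \<mu> \<and>
     (\<forall>A\<in>sets \<mu>. emeasure \<mu> A = (SUP K\<in>{K. compactin T K \<and> K \<subseteq> A}. emeasure \<mu> K))"

definition meas_le :: "'a::metric_space set \<Rightarrow> 'b topology \<Rightarrow> ('a \<times> 'a \<Rightarrow> 'b) \<Rightarrow> 'b measure \<Rightarrow> 'b measure \<Rightarrow> bool" where
  "meas_le M T e \<mu> \<nu> \<longleftrightarrow> (\<forall>g\<in>Gset M T e. integral\<^sup>L \<mu> g \<le> integral\<^sup>L \<nu> g)"

definition meas_minimal :: "'a::metric_space set \<Rightarrow> 'b topology \<Rightarrow> ('a \<times> 'a \<Rightarrow> 'b) \<Rightarrow> 'b measure \<Rightarrow> bool" where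
  "meas_minimal M T e \<mu> \<longleftrightarrow>
     (\<forall>\<nu>. radon_measure T \<nu> \<and> meas_le M T e \<nu> \<mu> \<longrightarrow> meas_le M T e \<mu> \<nu>)"

definition Gequiv :: "'a::metric_space set \<Rightarrow> 'b topology \<Rightarrow> ('a \<times> 'a \<Rightarrow> 'b) \<Rightarrow> 'b \<Rightarrow> 'b \<Rightarrow> bool" where
  "Gequiv M T e \<zeta> \<omega> \<longleftrightarrow> (\<forall>g\<in>Gset M T e. g \<zeta> = g \<omega>)"

definition qmap :: "'a::metric_space set \<Rightarrow> 'b topology \<Rightarrow> ('a \<times> 'a \<Rightarrow> 'b) \<Rightarrow> 'b \<Rightarrow> 'b set" where
  "qmap M T e \<zeta> = {\<omega> \<in> topspace T. Gequiv M T e \<zeta> \<omega>}"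

definition quot_space :: "'a::metric_space set \<Rightarrow> 'b topology \<Rightarrow> ('a \<times> 'a \<Rightarrow> 'b) \<Rightarrow> 'b set set" where
  "quot_space M T e = qmap M T e ` topspace T"

definition quot_open_sets :: "'a::metric_space set \<Rightarrow> 'b topology \<Rightarrow> ('a \<times> 'a \<Rightarrow> 'b) \<Rightarrow> 'b set set set" where
  "quot_open_sets M T e = {U. U \<subseteq> quot_space M T e \<and>
      openin T {\<zeta> \<in> topspace T. qmap M T e \<zeta> \<in> U}}"

definition quot_borel_sets :: "'a::metric_space set \<Rightarrow> 'b topology \<Rightarrow> ('a \<times> 'a \<Rightarrow> 'b) \<Rightarrow> 'b set set set" where
  "quot_borel_sets M T e = sigma_sets (quot_space M T e) (quot_open_sets M T e)"

definition usc_fun :: "'b topology \<Rightarrow> ('b \<Rightarrow> real) \<Rightarrow> bool" where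
  "usc_fun T f \<longleftrightarrow> (\<forall>a. openin T {x \<in> topspace T. f x < a})"

text \<open>Integral of an upper semicontinuous (hence bounded above, Borel) function w.r.t. a
  finite measure, in the extended reals: the usual integral if integrable, otherwise -\<infinity>.\<close>
definition eintegral :: "'b measure \<Rightarrow> ('b \<Rightarrow> real) \<Rightarrow> ereal" where
  "eintegral \<mu> f = (if integrable \<mu> f then ereal (integral\<^sup>L \<mu> f) else -\<infinity>)"

definition upper_G_int :: "'a::metric_space set \<Rightarrow> 'b topology \<Rightarrow> ('a \<times> 'a \<Rightarrow> 'b) \<Rightarrow> 'b measure \<Rightarrow> ('b \<Rightarrow> real) \<Rightarrow> ereal" where
  "upper_G_int M T e \<mu> f =
     Inf {ereal (integral\<^sup>L \<mu> g) | g. g \<in> Gset M T e \<and> (\<forall>x\<in>topspace T. f x \<le> g x)}"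

end

theory Submission
  imports Defs
begin

text \<open>Let \<open>p f = inf {\<integral>g d\<mu> | g \<in> G, f \<le> g}\<close>, a sublinear functional on \<open>C(\<beta>M\<^sup>~)\<close>.
  If \<open>\<mu>\<close> is minimal and \<open>f\<close> is continuous and constant on the classes of \<open>\<sim>\<close>, a Hahn--Banach
  extension of \<open>p f\<close> is a positive functional below \<open>p\<close>, i.e. (Riesz) integration against a
  Radon measure \<open>\<nu> \<preccurlyeq> \<mu>\<close>. Minimality gives \<open>\<integral>g d\<nu> = \<integral>g d\<mu>\<close> on \<open>G\<close>, hence on the lattice
  \<open>G - G\<close>, which is uniformly dense among the class-constant continuous functions by the lattice
  form of the Stone--Weierstrass theorem; so \<open>\<integral>f d\<mu> = p f\<close>. Conversely, (ii) applied to \<open>-g\<close>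
  yields minimality.

  For an upper semicontinuous \<open>f\<close> that is constant on the classes inside \<open>q\<^sup>-\<^sup>1(A)\<close>, the
  supremum of \<open>f\<close> over each class is again upper semicontinuous, is class-constant, and differs
  from \<open>f\<close> only off \<open>q\<^sup>-\<^sup>1(A)\<close>. A class-constant upper semicontinuous function is approximated
  from above, in integral, by continuous class-constant functions: cut it into layers and
  dominate each superlevel set by a class-constant Urysohn function, using outer regularity.\<close>

lemma field_le_epsilon_mult:
  fixes a b c :: real
  assumes "\<And>\<epsilon>. 0 < \<epsilon> \<Longrightarrow> a \<le> b + \<epsilon> * c" and "0 \<le> c"
  shows "a \<le> b"
proof (rule field_le_epsilon)
  fix \<epsilon> :: real assume \<epsilon>: "0 < \<epsilon>"
  have "a \<le> b + (\<epsilon> / (c + 1)) * c" using assms(1)[of "\<epsilon> / (c + 1)"] \<epsilon> assms(2) by simp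
  also have "(\<epsilon> / (c + 1)) * c \<le> \<epsilon>" using \<epsilon> assms(2) by (simp add: field_simps)
  finally show "a \<le> b + \<epsilon>" by simp
qed

definition layer :: "real \<Rightarrow> nat \<Rightarrow> real \<Rightarrow> real" where
  "layer \<delta> k t = min (max (t - real k * \<delta>) 0) \<delta>"

lemma sum_layer:
  assumes "0 \<le> t" "0 < \<delta>"
  shows "(\<Sum>k<N. layer \<delta> k t) = min t (real N * \<delta>)"
proof (induction N)
  case 0 then show ?case using assms by simp
next
  case (Suc N)
  then show ?case using assms by (simp add: layer_def min_def max_def algebra_simps)
qed

lemma le_sum_layer_weights:
  assumes \<delta>: "0 < \<delta>" and t: "0 \<le> t" "t \<le> real N * \<delta>"
    and w0: "\<And>k. 0 \<le> w k" and w1: "\<And>k. real k * \<delta> \<le> t \<Longrightarrow> 1 \<le> w k"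
  shows "t \<le> (\<Sum>k<N. \<delta> * w k)"
proof -
  have "t = (\<Sum>k<N. layer \<delta> k t)" using sum_layer[OF t(1) \<delta>] t(2) by simp
  also have "\<dots> \<le> (\<Sum>k<N. \<delta> * w k)"
  proof (rule sum_mono)
    fix k
    show "layer \<delta> k t \<le> \<delta> * w k"
    proof (cases "real k * \<delta> \<le> t")
      case True
      then have "\<delta> \<le> \<delta> * w k" using \<delta> w1 by simp
      then show ?thesis by (simp add: layer_def)
    next
      case False
      then show ?thesis using \<delta> w0[of k] by (simp add: layer_def)
    qed
  qed
  finally show ?thesis .
qed

lemma borel_sets_of_openin: "openin T U \<Longrightarrow> U \<in> borel_sets_of T"
  unfolding borel_sets_of_def by (rule sigma_sets.Basic) simp

lemma borel_sets_of_Diff: "A \<in> borel_sets_of T \<Longrightarrow> topspace T - A \<in> borel_sets_of T"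
  unfolding borel_sets_of_def by (rule sigma_sets.Compl)

lemma borel_sets_of_closedin: "closedin T C \<Longrightarrow> C \<in> borel_sets_of T"
  using borel_sets_of_Diff[OF borel_sets_of_openin, of T "topspace T - C"]
  by (simp add: closedin_def double_diff)

lemma sigma_algebra_borel_sets_of: "sigma_algebra (topspace T) (borel_sets_of T)"
  unfolding borel_sets_of_def by (rule sigma_algebra_sigma_sets) (auto dest: openin_subset)

lemma borel_sets_of_subset: "A \<in> borel_sets_of T \<Longrightarrow> A \<subseteq> topspace T"
  unfolding borel_sets_of_def by (rule sigma_sets_into_sp) (auto dest: openin_subset)

lemma radon_measureD:
  assumes "radon_measure T \<nu>"
  shows "space \<nu> = topspace T" "sets \<nu> = borel_sets_of T" "finite_measure \<nu>"
  using assms unfolding radon_measure_def by auto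

lemma usc_fun_continuous_map: "continuous_map T euclideanreal f \<Longrightarrow> usc_fun T f"
  unfolding usc_fun_def using openin_continuous_map_preimage[of T euclideanreal f "{..<_}"] by auto

lemma closedin_usc_fun_ge: "usc_fun T f \<Longrightarrow> closedin T {x\<in>topspace T. a \<le> f x}"
proof -
  assume "usc_fun T f"
  moreover have "topspace T - {x\<in>topspace T. a \<le> f x} = {x\<in>topspace T. f x < a}" by auto
  ultimately show ?thesis unfolding usc_fun_def closedin_def by auto
qed

lemma usc_fun_max_const: "usc_fun T f \<Longrightarrow> usc_fun T (\<lambda>x. max (f x) c)"
  unfolding usc_fun_def
proof
  fix a assume f: "\<forall>a. openin T {x \<in> topspace T. f x < a}"
  show "openin T {x \<in> topspace T. max (f x) c < a}"
  proof (cases "c < a")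
    case True
    then have "{x \<in> topspace T. max (f x) c < a} = {x \<in> topspace T. f x < a}" by auto
    then show ?thesis using f by simp
  qed simp
qed

lemma usc_fun_bounded_above:
  assumes "compact_space T" "usc_fun T f"
  shows "\<exists>B. \<forall>x\<in>topspace T. f x \<le> B"
proof -
  define U where "U n = {x\<in>topspace T. f x < real n}" for n :: nat
  have "openin T (U n)" for n using assms(2) unfolding usc_fun_def U_def by auto
  moreover have "topspace T \<subseteq> (\<Union>n. U n)"
  proof
    fix x assume "x \<in> topspace T"
    moreover have "f x < real (nat \<lceil>f x\<rceil> + 1)" by linarith
    ultimately show "x \<in> (\<Union>n. U n)" unfolding U_def by blast
  qed
  ultimately obtain F where F: "finite F" "F \<subseteq> range U" "topspace T \<subseteq> \<Union>F"
    using assms(1) unfolding compact_space_def compactin_def by (metis imageE)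
  obtain C where C: "finite C" "F = U ` C" using finite_subset_image[OF F(1,2)] by blast
  obtain N where N: "C \<subseteq> {..<N}" using finite_nat_bounded[OF C(1)] by blast
  have "f x \<le> real N" if x: "x \<in> topspace T" for x
  proof -
    obtain n where "n \<in> C" "x \<in> U n" using F(3) C(2) x by blast
    then have "f x < real n" "n < N" using N unfolding U_def by auto
    then show ?thesis by simp
  qed
  then show ?thesis by blast
qed

lemma continuous_map_real_bounded:
  assumes "compact_space T" "continuous_map T euclideanreal g"
  shows "\<exists>B. \<forall>x\<in>topspace T. \<bar>g x\<bar> \<le> B"
proof -
  have "compactin euclideanreal (g ` topspace T)"
    using image_compactin assms compact_space_def by blast
  then have "bounded (g ` topspace T)" by (simp add: compact_imp_bounded)
  then show ?thesis by (auto simp: bounded_real)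
qed

lemma borel_measurable_usc_fun:
  assumes "radon_measure T \<nu>" "usc_fun T f"
  shows "f \<in> borel_measurable \<nu>"
proof (rule borel_measurableI_less)
  fix a
  have "{x \<in> topspace T. f x < a} \<in> borel_sets_of T"
    using assms(2) unfolding usc_fun_def by (intro borel_sets_of_openin) auto
  then show "{w \<in> space \<nu>. f w < a} \<in> sets \<nu>" using radon_measureD[OF assms(1)] by simp
qed

lemma integrable_usc_fun:
  assumes \<nu>: "radon_measure T \<nu>" and f: "usc_fun T f" and bnd: "\<forall>x\<in>topspace T. a \<le> f x \<and> f x \<le> b"
  shows "integrable \<nu> f"
proof (rule finite_measure.integrable_const_bound[OF radon_measureD(3)[OF \<nu>], where B="max \<bar>a\<bar> \<bar>b\<bar>"])
  show "AE x in \<nu>. norm (f x) \<le> max \<bar>a\<bar> \<bar>b\<bar>"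
    using bnd radon_measureD(1)[OF \<nu>] by (intro AE_I2) (auto simp: abs_le_iff)
qed (rule borel_measurable_usc_fun[OF \<nu> f])

lemma integrable_continuous_map:
  assumes "radon_measure T \<nu>" "compact_space T" "continuous_map T euclideanreal g"
  shows "integrable \<nu> g"
proof -
  obtain B where "\<forall>x\<in>topspace T. \<bar>g x\<bar> \<le> B" using continuous_map_real_bounded assms(2,3) by blast
  then show ?thesis
    using integrable_usc_fun[OF assms(1) usc_fun_continuous_map[OF assms(3)], of "-B" B] by force
qed

lemma integral_indicator_le:
  assumes \<nu>: "radon_measure T \<nu>" and A: "A \<in> borel_sets_of T"
    and f: "integrable \<nu> f" and le: "\<forall>x\<in>topspace T. f x \<le> c * indicator A x"
  shows "integral\<^sup>L \<nu> f \<le> c * measure \<nu> A"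
proof -
  note \<nu>' = radon_measureD[OF \<nu>]
  have "integral\<^sup>L \<nu> f \<le> integral\<^sup>L \<nu> (\<lambda>x. c * indicator A x)"
    using le \<nu>' A finite_measure.emeasure_finite[OF \<nu>'(3)]
    by (intro integral_mono f integrable_mult_right integrable_real_indicator)
       (auto simp: top.not_eq_extremum)
  also have "\<dots> = c * measure \<nu> A" using \<nu>' A borel_sets_of_subset[OF A] by (simp add: Int_absorb2)
  finally show ?thesis .
qed

lemma integral_indicator_ge:
  assumes \<nu>: "radon_measure T \<nu>" and A: "A \<in> borel_sets_of T"
    and f: "integrable \<nu> f" and ge: "\<forall>x\<in>topspace T. c * indicator A x \<le> f x"
  shows "c * measure \<nu> A \<le> integral\<^sup>L \<nu> f"
  using integral_indicator_le[OF \<nu> A _, of "\<lambda>x. - f x" "- c"] f ge by simp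

lemma integral_uniformly_close:
  assumes \<nu>: "radon_measure T \<nu>" and T: "compact_space T"
    and f: "continuous_map T euclideanreal f" and h: "continuous_map T euclideanreal h"
    and close: "\<forall>x\<in>topspace T. \<bar>h x - f x\<bar> < \<epsilon>"
  shows "\<bar>integral\<^sup>L \<nu> f - integral\<^sup>L \<nu> h\<bar> \<le> \<epsilon> * measure \<nu> (topspace T)"
proof -
  note \<nu>' = radon_measureD[OF \<nu>]
  have fi: "integrable \<nu> f" and hi: "integrable \<nu> h" using integrable_continuous_map[OF \<nu> T] f h by auto
  have "\<bar>integral\<^sup>L \<nu> f - integral\<^sup>L \<nu> h\<bar> = \<bar>integral\<^sup>L \<nu> (\<lambda>x. f x - h x)\<bar>" using fi hi by simp
  also have "\<dots> \<le> integral\<^sup>L \<nu> (\<lambda>x. \<bar>f x - h x\<bar>)"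
    using integral_norm_bound[of \<nu> "\<lambda>x. f x - h x"] by simp
  also have "\<dots> \<le> integral\<^sup>L \<nu> (\<lambda>x. \<epsilon>)"
    using fi hi close \<nu>' finite_measure.integrable_const[OF \<nu>'(3)]
    by (intro integral_mono) (auto simp: abs_minus_commute less_imp_le)
  also have "\<dots> = \<epsilon> * measure \<nu> (topspace T)" using \<nu>' by simp
  finally show ?thesis .
qed

lemma radon_measure_outer_regular:
  assumes \<mu>: "radon_measure T \<mu>" and T: "Hausdorff_space T"
    and A: "A \<in> borel_sets_of T" and \<epsilon>: "0 < \<epsilon>"
  shows "\<exists>V. openin T V \<and> A \<subseteq> V \<and> measure \<mu> V \<le> measure \<mu> A + \<epsilon>"
proof -
  note \<mu>' = radon_measureD[OF \<mu>]
  have AO: "A \<subseteq> topspace T" by (rule borel_sets_of_subset[OF A])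
  have sets: "topspace T \<in> sets \<mu>" "A \<in> sets \<mu>"
    using A \<mu>' by (auto intro: borel_sets_of_openin)
  have mC: "measure \<mu> (topspace T - A) = measure \<mu> (topspace T) - measure \<mu> A"
    using finite_measure.finite_measure_Diff[OF \<mu>'(3) sets] AO .
  show ?thesis
  proof (cases "measure \<mu> (topspace T - A) \<le> \<epsilon>")
    case True
    then show ?thesis using mC AO by (intro exI[of _ "topspace T"]) auto
  next
    case False
    have "ennreal (measure \<mu> (topspace T - A) - \<epsilon>) < emeasure \<mu> (topspace T - A)"
      using False \<epsilon> finite_measure.emeasure_eq_measure[OF \<mu>'(3)] by (simp add: ennreal_lessI)
    also have "\<dots> = (SUP K\<in>{K. compactin T K \<and> K \<subseteq> topspace T - A}. emeasure \<mu> K)"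
      using \<mu> borel_sets_of_Diff[OF A] unfolding radon_measure_def by auto
    finally obtain K where K: "compactin T K" "K \<subseteq> topspace T - A"
      "ennreal (measure \<mu> (topspace T - A) - \<epsilon>) < emeasure \<mu> K"
      by (auto simp: less_SUP_iff)
    have cK: "closedin T K" using K(1) T compactin_imp_closedin by blast
    then have KB: "K \<in> sets \<mu>" using \<mu>' by (simp add: borel_sets_of_closedin)
    have "measure \<mu> (topspace T - A) - \<epsilon> < measure \<mu> K"
      using K(3) finite_measure.emeasure_eq_measure[OF \<mu>'(3)] False \<epsilon>
      by (simp add: ennreal_less_iff)
    moreover have "measure \<mu> (topspace T - K) = measure \<mu> (topspace T) - measure \<mu> K"
      using finite_measure.finite_measure_Diff[OF \<mu>'(3) sets(1) KB] closedin_subset[OF cK] by simp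
    ultimately show ?thesis
      using mC cK K(2) AO by (intro exI[of _ "topspace T - K"]) auto
  qed
qed

lemma eintegral_cong_AE:
  assumes "f \<in> borel_measurable \<mu>" "g \<in> borel_measurable \<mu>" "AE x in \<mu>. f x = g x"
  shows "eintegral \<mu> f = eintegral \<mu> g"
  using integrable_cong_AE[OF assms] integral_cong_AE[OF assms] unfolding eintegral_def by simp

lemma nn_integral_max_const_SUP:
  fixes F :: "'b \<Rightarrow> real"
  assumes [measurable]: "F \<in> borel_measurable \<mu>"
  shows "(\<integral>\<^sup>+x. ennreal (B - F x) \<partial>\<mu>) = (SUP m. \<integral>\<^sup>+x. ennreal (B - max (F x) (B - real m)) \<partial>\<mu>)"
proof -
  have "(SUP m. ennreal (B - max (F x) (B - real m))) = ennreal (B - F x)" for x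
  proof (rule antisym)
    show "(SUP m. ennreal (B - max (F x) (B - real m))) \<le> ennreal (B - F x)"
      by (rule SUP_least) (auto intro!: ennreal_leI)
    have "B - real (nat \<lceil>B - F x\<rceil>) \<le> F x" by linarith
    then show "ennreal (B - F x) \<le> (SUP m. ennreal (B - max (F x) (B - real m)))"
      by (intro SUP_upper2[of "nat \<lceil>B - F x\<rceil>"]) auto
  qed
  then have "(\<integral>\<^sup>+x. ennreal (B - F x) \<partial>\<mu>) = (\<integral>\<^sup>+x. (SUP m. ennreal (B - max (F x) (B - real m))) \<partial>\<mu>)"
    by simp
  also have "\<dots> = (SUP m. \<integral>\<^sup>+x. ennreal (B - max (F x) (B - real m)) \<partial>\<mu>)"
    by (rule nn_integral_monotone_convergence_SUP) (auto intro!: incseq_SucI le_funI ennreal_leI)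
  finally show ?thesis .
qed

text \<open>The truncations \<open>max F (B - m)\<close> decrease to \<open>F\<close>; monotone convergence is applied to
  \<open>B - F \<ge> 0\<close>, so that the case \<open>eintegral \<mu> F = -\<infinity>\<close> is covered.\<close>

lemma integral_max_const_less:
  fixes F :: "'b \<Rightarrow> real"
  assumes fin: "finite_measure \<mu>" and F[measurable]: "F \<in> borel_measurable \<mu>"
    and B: "\<forall>x\<in>space \<mu>. F x \<le> B" and r: "eintegral \<mu> F < ereal r"
  obtains m :: nat where "integral\<^sup>L \<mu> (\<lambda>x. max (F x) (B - real m)) < r"
proof -
  define m0 where "m0 = measure \<mu> (space \<mu>)"
  have const: "integrable \<mu> (\<lambda>x. B)" by (rule finite_measure.integrable_const[OF fin])
  have int_m: "integrable \<mu> (\<lambda>x. max (F x) (B - real m))" for m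
  proof (rule finite_measure.integrable_const_bound[OF fin, where B = "\<bar>B\<bar> + real m"])
    show "AE x in \<mu>. norm (max (F x) (B - real m)) \<le> \<bar>B\<bar> + real m" using B by (intro AE_I2) auto
  qed measurable
  have compl: "integral\<^sup>L \<mu> (\<lambda>x. B - f x) = m0 * B - integral\<^sup>L \<mu> f" if "integrable \<mu> f" for f
    using Bochner_Integration.integral_diff[OF const that] by (simp add: m0_def)
  have nn: "(\<integral>\<^sup>+x. ennreal (B - f x) \<partial>\<mu>) = ennreal (m0 * B - integral\<^sup>L \<mu> f)"
    if "integrable \<mu> f" "\<forall>x\<in>space \<mu>. f x \<le> B" for f
    using that by (subst nn_integral_eq_integral) (auto intro!: AE_I2 Bochner_Integration.integrable_diff const simp: compl)
  show ?thesis
  proof (cases "m0 * B < r")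
    case True
    have "integral\<^sup>L \<mu> (\<lambda>x. max (F x) (B - real 0)) = m0 * B"
      using B by (simp add: m0_def max_absorb2 cong: Bochner_Integration.integral_cong)
    then show ?thesis using True that[of 0] by simp
  next
    case False
    have "ennreal (m0 * B - r) < (\<integral>\<^sup>+x. ennreal (B - F x) \<partial>\<mu>)"
    proof (cases "integrable \<mu> F")
      case True
      then have "integral\<^sup>L \<mu> F < r" using r unfolding eintegral_def by simp
      then show ?thesis using nn[OF True B] False by (simp add: ennreal_lessI)
    next
      case False
      have "(\<integral>\<^sup>+x. ennreal (B - F x) \<partial>\<mu>) = \<infinity>"
      proof (rule ccontr)
        assume "(\<integral>\<^sup>+x. ennreal (B - F x) \<partial>\<mu>) \<noteq> \<infinity>"
        then have "integrable \<mu> (\<lambda>x. B - F x)"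
          using B by (intro integrableI_nonneg) (auto intro!: AE_I2 simp: top.not_eq_extremum)
        then have "integrable \<mu> (\<lambda>x. B - (B - F x))" by (rule Bochner_Integration.integrable_diff[OF const])
        then show False using False by simp
      qed
      then show ?thesis by simp
    qed
    also have "(\<integral>\<^sup>+x. ennreal (B - F x) \<partial>\<mu>) = (SUP m. \<integral>\<^sup>+x. ennreal (B - max (F x) (B - real m)) \<partial>\<mu>)"
      by (rule nn_integral_max_const_SUP[OF F])
    finally obtain m where "ennreal (m0 * B - r) < (\<integral>\<^sup>+x. ennreal (B - max (F x) (B - real m)) \<partial>\<mu>)"
      by (auto simp: less_SUP_iff)
    also have "\<dots> = ennreal (m0 * B - integral\<^sup>L \<mu> (\<lambda>x. max (F x) (B - real m)))"
      using B by (intro nn[OF int_m]) auto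
    finally show ?thesis using False that by (simp add: ennreal_less_iff)
  qed
qed

section \<open>The Riesz representation theorem on compact Hausdorff spaces\<close>

text \<open>The construction of Rudin, Real and Complex Analysis, Thm. 2.14: \<open>riesz_open T \<phi> U\<close> is
  \<open>sup {\<phi> h | h \<prec> U}\<close> and \<open>riesz_outer\<close> the outer measure it induces. On a compact space the
  condition \<open>h \<prec> U\<close> (support of \<open>h\<close> compact and inside \<open>U\<close>) is replaced by \<open>h = 0\<close> off \<open>U\<close>;
  the compact support is recovered from \<open>shrink h \<epsilon>\<close>.\<close>

definition bump_funs :: "'b topology \<Rightarrow> 'b set \<Rightarrow> ('b \<Rightarrow> real) set" where
  "bump_funs T U = {h. continuous_map T euclideanreal h \<and> (\<forall>x\<in>topspace T. 0 \<le> h x \<and> h x \<le> 1)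
      \<and> (\<forall>x\<in>topspace T - U. h x = 0)}"

definition riesz_open :: "'b topology \<Rightarrow> (('b \<Rightarrow> real) \<Rightarrow> real) \<Rightarrow> 'b set \<Rightarrow> real" where
  "riesz_open T \<phi> U = Sup (\<phi> ` bump_funs T U)"

definition riesz_outer :: "'b topology \<Rightarrow> (('b \<Rightarrow> real) \<Rightarrow> real) \<Rightarrow> 'b set \<Rightarrow> real" where
  "riesz_outer T \<phi> A = Inf (riesz_open T \<phi> ` {U. openin T U \<and> A \<subseteq> U})"

definition riesz_measure :: "'b topology \<Rightarrow> (('b \<Rightarrow> real) \<Rightarrow> real) \<Rightarrow> 'b measure" where
  "riesz_measure T \<phi> = measure_of (topspace T) (borel_sets_of T) (\<lambda>A. ennreal (riesz_outer T \<phi> A))"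

definition shrink :: "('b \<Rightarrow> real) \<Rightarrow> real \<Rightarrow> 'b \<Rightarrow> real" where
  "shrink h \<epsilon> = (\<lambda>x. max (h x - \<epsilon>) 0)"

locale positive_functional =
  fixes T :: "'b topology" and \<phi> :: "('b \<Rightarrow> real) \<Rightarrow> real"
  assumes compact: "compact_space T" and Hausdorff: "Hausdorff_space T"
    and additive: "\<And>f g. continuous_map T euclideanreal f \<Longrightarrow> continuous_map T euclideanreal g \<Longrightarrow>
              \<phi> (\<lambda>x. f x + g x) = \<phi> f + \<phi> g"
    and homogeneous: "\<And>f c. continuous_map T euclideanreal f \<Longrightarrow> \<phi> (\<lambda>x. c * f x) = c * \<phi> f"
    and nonneg: "\<And>f. continuous_map T euclideanreal f \<Longrightarrow> (\<forall>x\<in>topspace T. 0 \<le> f x) \<Longrightarrow> 0 \<le> \<phi> f"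
begin

abbreviation "\<Omega> \<equiv> topspace T"
abbreviation "CT f \<equiv> continuous_map T euclideanreal f"
abbreviation "\<kappa> \<equiv> riesz_open T \<phi>"
abbreviation "\<rho> \<equiv> riesz_outer T \<phi>"
abbreviation "\<mu> \<equiv> riesz_measure T \<phi>"

lemma diff: "CT f \<Longrightarrow> CT g \<Longrightarrow> \<phi> (\<lambda>x. f x - g x) = \<phi> f - \<phi> g"
  using additive[of f "\<lambda>x. (-1) * g x"] homogeneous[of g "-1"]
  by (simp add: continuous_map_real_mult_left)

lemma mono: "CT f \<Longrightarrow> CT g \<Longrightarrow> (\<forall>x\<in>\<Omega>. f x \<le> g x) \<Longrightarrow> \<phi> f \<le> \<phi> g"
  using nonneg[of "\<lambda>x. g x - f x"] diff[of g f] by (auto intro: continuous_map_diff)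

lemma cong: "CT f \<Longrightarrow> CT g \<Longrightarrow> (\<forall>x\<in>\<Omega>. f x = g x) \<Longrightarrow> \<phi> f = \<phi> g"
  using mono[of f g] mono[of g f] by auto

lemma zero: "\<phi> (\<lambda>x. 0) = 0"
  using homogeneous[of "\<lambda>x. 0" 0] by simp

lemma const: "\<phi> (\<lambda>x. c) = c * \<phi> (\<lambda>x. 1)"
  using homogeneous[of "\<lambda>x. 1" c] by simp

lemma one_nonneg: "0 \<le> \<phi> (\<lambda>x. 1)"
  by (rule nonneg) auto

lemma sum: "finite S \<Longrightarrow> (\<forall>k\<in>S. CT (f k)) \<Longrightarrow> \<phi> (\<lambda>x. \<Sum>k\<in>S. f k x) = (\<Sum>k\<in>S. \<phi> (f k))"
proof (induction S rule: finite_induct)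
  case (insert a S)
  then have "\<phi> (\<lambda>x. f a x + (\<Sum>k\<in>S. f k x)) = \<phi> (f a) + \<phi> (\<lambda>x. \<Sum>k\<in>S. f k x)"
    by (intro additive) (auto intro!: continuous_map_sum)
  then show ?case using insert by simp
qed (simp add: zero)

lemma normal: "normal_space T"
  using compact Hausdorff compact_Hausdorff_or_regular_imp_normal_space by blast

lemma bump_funs_zero: "(\<lambda>x. 0) \<in> bump_funs T U"
  by (simp add: bump_funs_def)

lemma bump_funs_mono: "U \<subseteq> V \<Longrightarrow> bump_funs T U \<subseteq> bump_funs T V"
  by (auto simp: bump_funs_def)

lemma bump_funs_le_one: "h \<in> bump_funs T U \<Longrightarrow> \<phi> h \<le> \<phi> (\<lambda>x. 1)"
  by (rule mono) (auto simp: bump_funs_def)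

lemma le_riesz_open: "h \<in> bump_funs T U \<Longrightarrow> \<phi> h \<le> \<kappa> U"
  unfolding riesz_open_def using bump_funs_le_one
  by (intro cSup_upper) (auto intro!: bdd_aboveI2)

lemma riesz_open_least: "(\<And>h. h \<in> bump_funs T U \<Longrightarrow> \<phi> h \<le> c) \<Longrightarrow> \<kappa> U \<le> c"
  unfolding riesz_open_def using bump_funs_zero by (intro cSup_least) auto

lemma riesz_open_nonneg: "0 \<le> \<kappa> U"
  using le_riesz_open[OF bump_funs_zero] zero by simp

lemma riesz_open_mono: "U \<subseteq> V \<Longrightarrow> \<kappa> U \<le> \<kappa> V"
  using bump_funs_mono by (intro riesz_open_least le_riesz_open) blast

lemma riesz_open_topspace: "\<kappa> \<Omega> = \<phi> (\<lambda>x. 1)"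
  by (intro antisym riesz_open_least bump_funs_le_one le_riesz_open) (auto simp: bump_funs_def)

lemma riesz_open_empty: "\<kappa> {} = 0"
proof (rule antisym[OF riesz_open_least riesz_open_nonneg])
  fix h assume "h \<in> bump_funs T {}"
  then have "CT h" "\<forall>x\<in>\<Omega>. h x = 0" by (auto simp: bump_funs_def)
  then show "\<phi> h \<le> 0" using cong[of h "\<lambda>x. 0"] zero by auto
qed

lemma shrink_continuous: "CT h \<Longrightarrow> CT (shrink h \<epsilon>)"
  unfolding shrink_def by (intro continuous_intros) auto

lemma shrink_le: "h \<in> bump_funs T U \<Longrightarrow> 0 < \<epsilon> \<Longrightarrow> \<phi> h \<le> \<phi> (shrink h \<epsilon>) + \<epsilon> * \<phi> (\<lambda>x. 1)"
proof -
  assume h: "h \<in> bump_funs T U" and \<epsilon>: "0 < \<epsilon>"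
  then have ch: "CT h" by (simp add: bump_funs_def)
  have "\<phi> h - \<phi> (shrink h \<epsilon>) = \<phi> (\<lambda>x. h x - shrink h \<epsilon> x)"
    using diff[OF ch shrink_continuous[OF ch]] by simp
  also have "\<dots> \<le> \<phi> (\<lambda>x. \<epsilon>)"
    by (rule mono) (auto simp: shrink_def intro!: continuous_intros ch)
  finally show ?thesis using const[of \<epsilon>] by simp
qed

lemma closedin_ge: "CT h \<Longrightarrow> closedin T {x\<in>\<Omega>. \<epsilon> \<le> h x}"
  using closedin_continuous_map_preimage[of T euclideanreal h "{\<epsilon>..}"] by auto

lemma shrink_bump_funs:
  "h \<in> bump_funs T U \<Longrightarrow> 0 < \<epsilon> \<Longrightarrow> {x\<in>\<Omega>. \<epsilon> \<le> h x} \<subseteq> V \<Longrightarrow> shrink h \<epsilon> \<in> bump_funs T V"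
  unfolding bump_funs_def shrink_def by (auto intro!: continuous_intros)

lemma shrink_split_Un:
  assumes U: "openin T U" and V: "openin T V" and h: "h \<in> bump_funs T (U \<union> V)" and \<epsilon>: "0 < \<epsilon>"
  obtains h1 h2 where "h1 \<in> bump_funs T U" "h2 \<in> bump_funs T V" "shrink h \<epsilon> = (\<lambda>x. h1 x + h2 x)"
proof -
  define K where "K = {x\<in>\<Omega>. \<epsilon> \<le> h x}"
  have ch: "CT h" and h01: "\<forall>x\<in>\<Omega>. 0 \<le> h x \<and> h x \<le> 1" using h by (auto simp: bump_funs_def)
  have KUV: "K \<subseteq> U \<union> V" using h \<epsilon> unfolding K_def bump_funs_def by force
  have cA: "closedin T (K \<inter> (\<Omega> - V))" unfolding K_def using closedin_ge[OF ch] V by blast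
  have cB: "closedin T (\<Omega> - U)" using U by blast
  have dj: "disjnt (\<Omega> - U) (K \<inter> (\<Omega> - V))" using KUV by (auto simp: disjnt_def)
  obtain u :: "'b \<Rightarrow> real" where u: "continuous_map T (top_of_set {0..1}) u"
    and u0: "u ` (\<Omega> - U) \<subseteq> {0}" and u1: "u ` (K \<inter> (\<Omega> - V)) \<subseteq> {1}"
    using Urysohn_lemma[OF normal cB cA dj, of 0 1] by auto
  have cu: "CT u" using u continuous_map_in_subtopology by blast
  have u01: "0 \<le> u x \<and> u x \<le> 1" if "x \<in> \<Omega>" for x using u that by (auto simp: continuous_map_def)
  have cs: "CT (shrink h \<epsilon>)" by (rule shrink_continuous[OF ch])
  have s01: "0 \<le> shrink h \<epsilon> x \<and> shrink h \<epsilon> x \<le> 1" if "x \<in> \<Omega>" for x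
    using h01 that \<epsilon> by (auto simp: shrink_def)
  show ?thesis
  proof
    have "CT (\<lambda>x. shrink h \<epsilon> x * u x)" using cs cu by (rule continuous_map_real_mult)
    moreover have "0 \<le> shrink h \<epsilon> x * u x \<and> shrink h \<epsilon> x * u x \<le> 1" if "x \<in> \<Omega>" for x
      using s01[OF that] u01[OF that] by (simp add: mult_le_one)
    moreover have "shrink h \<epsilon> x * u x = 0" if "x \<in> \<Omega> - U" for x using u0 that by auto
    ultimately show "(\<lambda>x. shrink h \<epsilon> x * u x) \<in> bump_funs T U" by (simp add: bump_funs_def)
  next
    have "CT (\<lambda>x. shrink h \<epsilon> x * (1 - u x))" using cs cu by (intro continuous_map_real_mult continuous_map_diff) auto
    moreover have "0 \<le> shrink h \<epsilon> x * (1 - u x) \<and> shrink h \<epsilon> x * (1 - u x) \<le> 1" if "x \<in> \<Omega>" for x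
      using s01[OF that] u01[OF that] by (simp add: mult_le_one)
    moreover have "shrink h \<epsilon> x * (1 - u x) = 0" if x: "x \<in> \<Omega> - V" for x
    proof (cases "\<epsilon> \<le> h x")
      case True
      then have "u x = 1" using x u1 by (auto simp: K_def)
      then show ?thesis by simp
    qed (simp add: shrink_def)
    ultimately show "(\<lambda>x. shrink h \<epsilon> x * (1 - u x)) \<in> bump_funs T V" by (simp add: bump_funs_def)
  next
    show "shrink h \<epsilon> = (\<lambda>x. shrink h \<epsilon> x * u x + shrink h \<epsilon> x * (1 - u x))"
      by (simp add: algebra_simps)
  qed
qed

lemma riesz_open_Un:
  assumes U: "openin T U" and V: "openin T V"
  shows "\<kappa> (U \<union> V) \<le> \<kappa> U + \<kappa> V"
proof (rule riesz_open_least)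
  fix h assume h: "h \<in> bump_funs T (U \<union> V)"
  show "\<phi> h \<le> \<kappa> U + \<kappa> V"
  proof (rule field_le_epsilon_mult[OF _ one_nonneg])
    fix \<epsilon> :: real assume \<epsilon>: "0 < \<epsilon>"
    obtain h1 h2 where h12: "h1 \<in> bump_funs T U" "h2 \<in> bump_funs T V" "shrink h \<epsilon> = (\<lambda>x. h1 x + h2 x)"
      using shrink_split_Un[OF U V h \<epsilon>] .
    then have "\<phi> (shrink h \<epsilon>) = \<phi> h1 + \<phi> h2" by (simp add: additive bump_funs_def)
    also have "\<dots> \<le> \<kappa> U + \<kappa> V" using h12 by (intro add_mono le_riesz_open)
    finally show "\<phi> h \<le> \<kappa> U + \<kappa> V + \<epsilon> * \<phi> (\<lambda>x. 1)" using shrink_le[OF h \<epsilon>] by simp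
  qed
qed

lemma riesz_open_UN_lessThan:
  fixes U :: "nat \<Rightarrow> 'b set"
  assumes "\<And>i. openin T (U i)"
  shows "\<kappa> (\<Union>i<n. U i) \<le> (\<Sum>i<n. \<kappa> (U i))"
proof (induction n)
  case (Suc n)
  have "(\<Union>i<Suc n. U i) = (\<Union>i<n. U i) \<union> U n" by (auto simp: lessThan_Suc)
  moreover have "openin T (\<Union>i<n. U i)" using assms by (intro openin_Union) auto
  then have "\<kappa> ((\<Union>i<n. U i) \<union> U n) \<le> \<kappa> (\<Union>i<n. U i) + \<kappa> (U n)"
    using assms by (rule riesz_open_Un)
  ultimately show ?case using Suc by simp
qed (simp add: riesz_open_empty)

lemma riesz_open_UN:
  fixes U :: "nat \<Rightarrow> 'b set"
  assumes U: "\<And>i. openin T (U i)" and s: "summable (\<lambda>i. \<kappa> (U i))"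
  shows "\<kappa> (\<Union>i. U i) \<le> (\<Sum>i. \<kappa> (U i))"
proof (rule riesz_open_least)
  fix h assume h: "h \<in> bump_funs T (\<Union>i. U i)"
  then have ch: "CT h" by (simp add: bump_funs_def)
  show "\<phi> h \<le> (\<Sum>i. \<kappa> (U i))"
  proof (rule field_le_epsilon_mult[OF _ one_nonneg])
    fix \<epsilon> :: real assume \<epsilon>: "0 < \<epsilon>"
    define K where "K = {x\<in>\<Omega>. \<epsilon> \<le> h x}"
    have "compactin T K" unfolding K_def using closedin_ge[OF ch] compact closedin_compact_space by blast
    moreover have "K \<subseteq> (\<Union>i. U i)" using h \<epsilon> unfolding K_def bump_funs_def by force
    ultimately obtain F where F: "finite F" "F \<subseteq> range U" "K \<subseteq> \<Union>F"
      using U unfolding compactin_def by (metis imageE)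
    obtain C where C: "finite C" "F = U ` C" using finite_subset_image[OF F(1,2)] by blast
    obtain n where n: "C \<subseteq> {..<n}" using finite_nat_bounded[OF C(1)] by blast
    have "K \<subseteq> (\<Union>i<n. U i)" using F(3) C(2) n by auto
    then have "\<phi> (shrink h \<epsilon>) \<le> (\<Sum>i<n. \<kappa> (U i))"
      using le_riesz_open[OF shrink_bump_funs[OF h \<epsilon>]] riesz_open_UN_lessThan[OF U, where n=n] K_def
      by (meson order_trans)
    also have "\<dots> \<le> (\<Sum>i. \<kappa> (U i))"
      by (rule sum_le_suminf[OF s]) (auto simp: riesz_open_nonneg)
    finally show "\<phi> h \<le> (\<Sum>i. \<kappa> (U i)) + \<epsilon> * \<phi> (\<lambda>x. 1)" using shrink_le[OF h \<epsilon>] by simp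
  qed
qed

lemma riesz_outer_le: "openin T U \<Longrightarrow> A \<subseteq> U \<Longrightarrow> \<rho> A \<le> \<kappa> U"
  unfolding riesz_outer_def by (rule cInf_lower) (auto intro!: bdd_belowI2 riesz_open_nonneg)

lemma riesz_outer_greatest:
  assumes A: "A \<subseteq> \<Omega>" and c: "\<And>U. openin T U \<Longrightarrow> A \<subseteq> U \<Longrightarrow> c \<le> \<kappa> U"
  shows "c \<le> \<rho> A"
  unfolding riesz_outer_def using A c by (intro cInf_greatest) auto

lemma riesz_outer_nonneg: "A \<subseteq> \<Omega> \<Longrightarrow> 0 \<le> \<rho> A"
  by (rule riesz_outer_greatest) (simp_all add: riesz_open_nonneg)

lemma riesz_outer_open: "openin T U \<Longrightarrow> \<rho> U = \<kappa> U"
  by (intro antisym riesz_outer_le riesz_outer_greatest riesz_open_mono) (auto dest: openin_subset)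

lemma riesz_outer_mono: "A \<subseteq> B \<Longrightarrow> B \<subseteq> \<Omega> \<Longrightarrow> \<rho> A \<le> \<rho> B"
  by (rule riesz_outer_greatest) (auto intro: riesz_outer_le)

lemma riesz_outer_empty: "\<rho> {} = 0"
  using riesz_outer_open[of "{}"] riesz_open_empty by simp

lemma riesz_outer_approx:
  assumes "A \<subseteq> \<Omega>" "0 < \<epsilon>"
  obtains U where "openin T U" "A \<subseteq> U" "\<kappa> U < \<rho> A + \<epsilon>"
proof -
  have "\<kappa> ` {U. openin T U \<and> A \<subseteq> U} \<noteq> {}" using assms by auto
  moreover have "Inf (\<kappa> ` {U. openin T U \<and> A \<subseteq> U}) < \<rho> A + \<epsilon>"
    using assms(2) unfolding riesz_outer_def by simp
  ultimately obtain y where "y \<in> \<kappa> ` {U. openin T U \<and> A \<subseteq> U}" "y < \<rho> A + \<epsilon>"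
    by (meson cInf_lessD)
  then show ?thesis using that by blast
qed

lemma riesz_outer_UN:
  assumes A: "\<And>i. A i \<subseteq> \<Omega>" and s: "summable (\<lambda>i. \<rho> (A i))"
  shows "\<rho> (\<Union>i. A i) \<le> (\<Sum>i. \<rho> (A i))"
proof (rule field_le_epsilon)
  fix \<epsilon> :: real assume \<epsilon>: "0 < \<epsilon>"
  obtain U where U: "\<And>i. openin T (U i)" "\<And>i. A i \<subseteq> U i"
    "\<And>i. \<kappa> (U i) < \<rho> (A i) + \<epsilon> * (1/2)^Suc i"
  proof -
    have "\<forall>i. \<exists>U. openin T U \<and> A i \<subseteq> U \<and> \<kappa> U < \<rho> (A i) + \<epsilon> * (1/2)^Suc i"
    proof
      fix i
      have "0 < \<epsilon> * (1/2)^Suc i" using \<epsilon> by simp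
      then show "\<exists>U. openin T U \<and> A i \<subseteq> U \<and> \<kappa> U < \<rho> (A i) + \<epsilon> * (1/2)^Suc i"
        by (rule riesz_outer_approx[OF A]) blast
    qed
    then show ?thesis using that by metis
  qed
  have "(\<lambda>i. \<epsilon> * (1/2)^Suc i) sums \<epsilon>"
    using sums_mult[OF power_half_series, of \<epsilon>] by simp
  then have sg: "(\<lambda>i. \<rho> (A i) + \<epsilon> * (1/2)^Suc i) sums ((\<Sum>i. \<rho> (A i)) + \<epsilon>)"
    by (rule sums_add[OF summable_sums[OF s]])
  have sU: "summable (\<lambda>i. \<kappa> (U i))"
    by (rule summable_comparison_test[OF _ sums_summable[OF sg]])
       (use U(3) riesz_open_nonneg in \<open>auto intro!: exI[of _ 0] less_imp_le\<close>)
  have "\<rho> (\<Union>i. A i) \<le> \<kappa> (\<Union>i. U i)"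
    using U by (intro riesz_outer_le) (auto intro: openin_Union)
  also have "\<dots> \<le> (\<Sum>i. \<kappa> (U i))" by (rule riesz_open_UN[OF U(1) sU])
  also have "\<dots> \<le> (\<Sum>i. \<rho> (A i)) + \<epsilon>"
    using suminf_le[OF _ sU sums_summable[OF sg]] sums_unique[OF sg] U(3) less_imp_le by metis
  finally show "\<rho> (\<Union>i. A i) \<le> (\<Sum>i. \<rho> (A i)) + \<epsilon>" .
qed

lemma riesz_open_split:
  assumes U: "openin T U" and V: "openin T V"
  shows "\<kappa> (V \<inter> U) + \<rho> (V - U) \<le> \<kappa> V"
proof -
  have "\<kappa> (V \<inter> U) \<le> \<kappa> V - \<rho> (V - U)"
  proof (rule riesz_open_least)
    fix h1 assume h1: "h1 \<in> bump_funs T (V \<inter> U)"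
    then have ch: "CT h1" by (simp add: bump_funs_def)
    show "\<phi> h1 \<le> \<kappa> V - \<rho> (V - U)"
    proof (rule field_le_epsilon_mult[OF _ one_nonneg])
      fix \<epsilon> :: real assume \<epsilon>: "0 < \<epsilon>"
      define W where "W = V - {x\<in>\<Omega>. \<epsilon> \<le> h1 x}"
      have oW: "openin T W" unfolding W_def using V closedin_ge[OF ch] by (rule openin_diff)
      have "{x\<in>\<Omega>. \<epsilon> \<le> h1 x} \<subseteq> V \<inter> U" using h1 \<epsilon> unfolding bump_funs_def by force
      then have VUW: "V - U \<subseteq> W" using W_def by auto
      have cs: "CT (shrink h1 \<epsilon>)" by (rule shrink_continuous[OF ch])
      have "\<kappa> W \<le> \<kappa> V - \<phi> (shrink h1 \<epsilon>)"
      proof (rule riesz_open_least)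
        fix h2 assume h2: "h2 \<in> bump_funs T W"
        have c2: "CT h2" using h2 by (simp add: bump_funs_def)
        have "0 \<le> shrink h1 \<epsilon> x + h2 x \<and> shrink h1 \<epsilon> x + h2 x \<le> 1" if x: "x \<in> \<Omega>" for x
        proof (cases "\<epsilon> \<le> h1 x")
          case True
          then have "h2 x = 0" using h2 x by (auto simp: W_def bump_funs_def)
          then show ?thesis using h1 x \<epsilon> by (auto simp: bump_funs_def shrink_def)
        qed (use h2 x in \<open>auto simp: bump_funs_def shrink_def\<close>)
        moreover have "shrink h1 \<epsilon> x + h2 x = 0" if x: "x \<in> \<Omega> - V" for x
          using h1 h2 x \<epsilon> W_def by (auto simp: bump_funs_def shrink_def)
        ultimately have "(\<lambda>x. shrink h1 \<epsilon> x + h2 x) \<in> bump_funs T V"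
          unfolding bump_funs_def using continuous_map_add[OF cs c2] by blast
        then show "\<phi> h2 \<le> \<kappa> V - \<phi> (shrink h1 \<epsilon>)" using le_riesz_open additive[OF cs c2] by fastforce
      qed
      moreover have "\<rho> (V - U) \<le> \<kappa> W" by (rule riesz_outer_le[OF oW VUW])
      ultimately show "\<phi> h1 \<le> \<kappa> V - \<rho> (V - U) + \<epsilon> * \<phi> (\<lambda>x. 1)"
        using shrink_le[OF h1 \<epsilon>] by simp
    qed
  qed
  then show ?thesis by simp
qed

lemma riesz_outer_split_open:
  assumes U: "openin T U" and X: "X \<subseteq> \<Omega>"
  shows "\<rho> (U \<inter> X) + \<rho> ((\<Omega> - U) \<inter> X) = \<rho> X"
proof (rule antisym)
  have "\<rho> X - \<rho> ((\<Omega> - U) \<inter> X) \<le> \<rho> (U \<inter> X)"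
  proof (rule riesz_outer_greatest)
    fix W assume W: "openin T W" "U \<inter> X \<subseteq> W"
    have "\<rho> X - \<kappa> W \<le> \<rho> ((\<Omega> - U) \<inter> X)"
    proof (rule riesz_outer_greatest)
      fix W2 assume W2: "openin T W2" "(\<Omega> - U) \<inter> X \<subseteq> W2"
      have "\<rho> X \<le> \<kappa> (W \<union> W2)" using W W2 X by (intro riesz_outer_le) auto
      also have "\<dots> \<le> \<kappa> W + \<kappa> W2" by (rule riesz_open_Un[OF W(1) W2(1)])
      finally show "\<rho> X - \<kappa> W \<le> \<kappa> W2" by simp
    qed auto
    then show "\<rho> X - \<rho> ((\<Omega> - U) \<inter> X) \<le> \<kappa> W" by simp
  qed (use X in auto)
  then show "\<rho> X \<le> \<rho> (U \<inter> X) + \<rho> ((\<Omega> - U) \<inter> X)" by simp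
next
  show "\<rho> (U \<inter> X) + \<rho> ((\<Omega> - U) \<inter> X) \<le> \<rho> X"
  proof (rule riesz_outer_greatest[OF X])
    fix V assume V: "openin T V" "X \<subseteq> V"
    have "\<rho> (U \<inter> X) \<le> \<kappa> (V \<inter> U)" using U V by (intro riesz_outer_le) auto
    moreover have "\<rho> ((\<Omega> - U) \<inter> X) \<le> \<rho> (V - U)"
      using V openin_subset[OF V(1)] by (intro riesz_outer_mono) auto
    ultimately show "\<rho> (U \<inter> X) + \<rho> ((\<Omega> - U) \<inter> X) \<le> \<kappa> V"
      using riesz_open_split[OF U V(1)] by linarith
  qed
qed

lemma outer_measure_space_riesz_outer: "outer_measure_space (Pow \<Omega>) (\<lambda>A. ennreal (\<rho> A))"
  unfolding outer_measure_space_def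
proof (intro conjI)
  show "positive (Pow \<Omega>) (\<lambda>A. ennreal (\<rho> A))" by (simp add: positive_def riesz_outer_empty)
  show "increasing (Pow \<Omega>) (\<lambda>A. ennreal (\<rho> A))"
    unfolding increasing_def by (auto intro!: ennreal_leI riesz_outer_mono)
  show "countably_subadditive (Pow \<Omega>) (\<lambda>A. ennreal (\<rho> A))"
    unfolding countably_subadditive_def
  proof (intro allI impI)
    fix A :: "nat \<Rightarrow> 'b set" assume "range A \<subseteq> Pow \<Omega>"
    then have A: "\<And>i. A i \<subseteq> \<Omega>" by auto
    show "ennreal (\<rho> (\<Union>i. A i)) \<le> (\<Sum>i. ennreal (\<rho> (A i)))"
    proof (cases "summable (\<lambda>i. \<rho> (A i))")
      case True
      then have "ennreal (\<rho> (\<Union>i. A i)) \<le> ennreal (\<Sum>i. \<rho> (A i))"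
        by (intro ennreal_leI riesz_outer_UN[OF A])
      also have "\<dots> = (\<Sum>i. ennreal (\<rho> (A i)))"
        using riesz_outer_nonneg[OF A] True by (intro suminf_ennreal2[symmetric]) auto
      finally show ?thesis .
    next
      case False
      then have "(\<Sum>i. ennreal (\<rho> (A i))) = top"
        using summable_suminf_not_top[of "\<lambda>i. \<rho> (A i)"] riesz_outer_nonneg[OF A] by fastforce
      then show ?thesis by simp
    qed
  qed
qed

lemma openin_lambda_system: "openin T U \<Longrightarrow> U \<in> lambda_system \<Omega> (Pow \<Omega>) (\<lambda>A. ennreal (\<rho> A))"
  unfolding lambda_system_def
proof (intro CollectI conjI ballI)
  assume U: "openin T U"
  then show "U \<in> Pow \<Omega>" using openin_subset by auto
  fix X assume "X \<in> Pow \<Omega>"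
  then have X: "X \<subseteq> \<Omega>" by simp
  have "ennreal (\<rho> (U \<inter> X)) + ennreal (\<rho> ((\<Omega> - U) \<inter> X)) = ennreal (\<rho> (U \<inter> X) + \<rho> ((\<Omega> - U) \<inter> X))"
    using X by (intro ennreal_plus[symmetric] riesz_outer_nonneg) auto
  also have "\<dots> = ennreal (\<rho> X)" using riesz_outer_split_open[OF U X] by simp
  finally show "ennreal (\<rho> (U \<inter> X)) + ennreal (\<rho> ((\<Omega> - U) \<inter> X)) = ennreal (\<rho> X)" .
qed

lemma measure_space_riesz_outer: "measure_space \<Omega> (borel_sets_of T) (\<lambda>A. ennreal (\<rho> A))"
proof -
  have ms: "measure_space \<Omega> (lambda_system \<Omega> (Pow \<Omega>) (\<lambda>A. ennreal (\<rho> A))) (\<lambda>A. ennreal (\<rho> A))"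
    by (rule sigma_algebra.caratheodory_lemma[OF sigma_algebra_Pow outer_measure_space_riesz_outer])
  then have "sigma_algebra \<Omega> (lambda_system \<Omega> (Pow \<Omega>) (\<lambda>A. ennreal (\<rho> A)))"
    by (simp add: measure_space_def)
  then have "borel_sets_of T \<subseteq> lambda_system \<Omega> (Pow \<Omega>) (\<lambda>A. ennreal (\<rho> A))"
    unfolding borel_sets_of_def by (rule sigma_algebra.sigma_sets_subset) (auto intro: openin_lambda_system)
  then show ?thesis by (rule measure_down[OF ms sigma_algebra_borel_sets_of])
qed

lemma space_riesz_measure: "space \<mu> = \<Omega>"
  unfolding riesz_measure_def using sigma_algebra.space_measure_of_eq[OF sigma_algebra_borel_sets_of[of T]] by simp

lemma sets_riesz_measure: "sets \<mu> = borel_sets_of T"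
  unfolding riesz_measure_def using sigma_algebra.sets_measure_of_eq[OF sigma_algebra_borel_sets_of[of T]] by simp

lemma emeasure_riesz_measure: "A \<in> borel_sets_of T \<Longrightarrow> emeasure \<mu> A = ennreal (\<rho> A)"
  unfolding riesz_measure_def using measure_space_riesz_outer
  by (intro emeasure_measure_of_sigma[OF sigma_algebra_borel_sets_of]) (auto simp: measure_space_def)

lemma measure_riesz_measure: "A \<in> borel_sets_of T \<Longrightarrow> measure \<mu> A = \<rho> A"
  using emeasure_riesz_measure[of A] riesz_outer_nonneg[OF borel_sets_of_subset] by (simp add: measure_def)

lemma finite_measure_riesz_measure: "finite_measure \<mu>"
  by (rule finite_measureI) (simp add: space_riesz_measure emeasure_riesz_measure borel_sets_of_openin)

lemma riesz_measure_inner_regular: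
  assumes A: "A \<in> borel_sets_of T"
  shows "emeasure \<mu> A = (SUP K\<in>{K. compactin T K \<and> K \<subseteq> A}. emeasure \<mu> K)"
proof (rule antisym)
  show "(SUP K\<in>{K. compactin T K \<and> K \<subseteq> A}. emeasure \<mu> K) \<le> emeasure \<mu> A"
    using compactin_imp_closedin[OF Hausdorff] A
    by (intro SUP_least emeasure_mono) (auto simp: sets_riesz_measure borel_sets_of_closedin)
next
  show "emeasure \<mu> A \<le> (SUP K\<in>{K. compactin T K \<and> K \<subseteq> A}. emeasure \<mu> K)"
  proof (rule ennreal_le_epsilon)
    fix \<epsilon> :: real assume \<epsilon>: "0 < \<epsilon>"
    note fin = finite_measure_riesz_measure
    have C: "\<Omega> - A \<in> borel_sets_of T" using A by (rule borel_sets_of_Diff)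
    obtain U where U: "openin T U" "\<Omega> - A \<subseteq> U" "\<kappa> U < \<rho> (\<Omega> - A) + \<epsilon>"
      using riesz_outer_approx[of "\<Omega> - A" \<epsilon>] \<epsilon> by auto
    have kK: "compactin T (\<Omega> - U)" using U(1) compact closedin_compact_space by blast
    have sets: "U \<in> sets \<mu>" "\<Omega> \<in> sets \<mu>" "A \<in> sets \<mu>"
      using U(1) A by (auto simp: sets_riesz_measure borel_sets_of_openin)
    have "measure \<mu> (\<Omega> - U) = measure \<mu> \<Omega> - measure \<mu> U"
      using finite_measure.finite_measure_Diff[OF fin sets(2,1)] openin_subset[OF U(1)] by simp
    moreover have "measure \<mu> (\<Omega> - A) = measure \<mu> \<Omega> - measure \<mu> A"
      using finite_measure.finite_measure_Diff[OF fin sets(2,3)] borel_sets_of_subset[OF A] by simp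
    moreover have "measure \<mu> U < measure \<mu> (\<Omega> - A) + \<epsilon>"
      using U(3) measure_riesz_measure[OF borel_sets_of_openin[OF U(1)]] measure_riesz_measure[OF C]
        riesz_outer_open[OF U(1)] by simp
    ultimately have "measure \<mu> A < measure \<mu> (\<Omega> - U) + \<epsilon>" by simp
    then have "emeasure \<mu> A \<le> emeasure \<mu> (\<Omega> - U) + ennreal \<epsilon>"
      using finite_measure.emeasure_eq_measure[OF fin] \<epsilon> by (simp flip: ennreal_plus)
    also have "\<dots> \<le> (SUP K\<in>{K. compactin T K \<and> K \<subseteq> A}. emeasure \<mu> K) + ennreal \<epsilon>"
      using kK U(2) by (intro add_right_mono SUP_upper) auto
    finally show "emeasure \<mu> A \<le> (SUP K\<in>{K. compactin T K \<and> K \<subseteq> A}. emeasure \<mu> K) + ennreal \<epsilon>" .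
  qed
qed

lemma radon_riesz_measure: "radon_measure T \<mu>"
  unfolding radon_measure_def
  using space_riesz_measure sets_riesz_measure finite_measure_riesz_measure riesz_measure_inner_regular
  by auto

lemma riesz_outer_le_closedin:
  assumes K: "closedin T K" and h: "CT h" and h0: "\<forall>x\<in>\<Omega>. 0 \<le> h x" and h1: "\<forall>x\<in>K. 1 \<le> h x"
  shows "\<rho> K \<le> \<phi> h"
proof -
  have KO: "K \<subseteq> \<Omega>" using closedin_subset[OF K] .
  have main: "(1 - \<epsilon>) * \<rho> K \<le> \<phi> h" if \<epsilon>: "0 < \<epsilon>" "\<epsilon> < 1" for \<epsilon>
  proof -
    define V where "V = {x\<in>\<Omega>. 1 - \<epsilon> < h x}"
    have oV: "openin T V" unfolding V_def
      using openin_continuous_map_preimage[OF h, of "{1-\<epsilon><..}"] by simp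
    have KV: "K \<subseteq> V" using KO h1 \<epsilon> unfolding V_def by force
    have "\<kappa> V \<le> (1 / (1 - \<epsilon>)) * \<phi> h"
    proof (rule riesz_open_least)
      fix h' assume h': "h' \<in> bump_funs T V"
      have "h' x \<le> 1 / (1 - \<epsilon>) * h x" if x: "x \<in> \<Omega>" for x
      proof (cases "x \<in> V")
        case True
        then have "1 \<le> 1 / (1 - \<epsilon>) * h x" using \<epsilon> by (simp add: V_def field_simps)
        moreover have "h' x \<le> 1" using h' x by (simp add: bump_funs_def)
        ultimately show ?thesis by linarith
      qed (use h' h0 x \<epsilon> in \<open>simp add: bump_funs_def\<close>)
      then have "\<phi> h' \<le> \<phi> (\<lambda>x. (1 / (1 - \<epsilon>)) * h x)"
        using h' by (intro mono continuous_map_real_mult_left h) (auto simp: bump_funs_def)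
      moreover have "\<phi> (\<lambda>x. (1 / (1 - \<epsilon>)) * h x) = (1 / (1 - \<epsilon>)) * \<phi> h" by (rule homogeneous[OF h])
      ultimately show "\<phi> h' \<le> 1 / (1 - \<epsilon>) * \<phi> h" by linarith
    qed
    then have "(1 - \<epsilon>) * \<kappa> V \<le> \<phi> h" using \<epsilon> by (simp add: field_simps)
    moreover have "(1 - \<epsilon>) * \<rho> K \<le> (1 - \<epsilon>) * \<kappa> V"
      using riesz_outer_le[OF oV KV] \<epsilon> by (intro mult_left_mono) auto
    ultimately show ?thesis by linarith
  qed
  show ?thesis
  proof (rule field_le_epsilon_mult[OF _ riesz_outer_nonneg[OF KO]])
    fix \<epsilon> :: real assume "0 < \<epsilon>"
    show "\<rho> K \<le> \<phi> h + \<epsilon> * \<rho> K"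
    proof (cases "\<epsilon> < 1")
      case True
      then show ?thesis using main[of \<epsilon>] \<open>0 < \<epsilon>\<close> by (simp add: algebra_simps)
    next
      case False
      then have "\<rho> K \<le> \<epsilon> * \<rho> K" using riesz_outer_nonneg[OF KO] by (simp add: mult_le_cancel_right1)
      then show ?thesis using nonneg[OF h h0] by simp
    qed
  qed
qed

lemma integrable_riesz_measure: "CT g \<Longrightarrow> integrable \<mu> g"
  by (rule integrable_continuous_map[OF radon_riesz_measure compact])

text \<open>The layer \<open>layer \<delta> k \<circ> g\<close> lies between \<open>\<delta>\<close> times the indicators of
  \<open>{(k + 1) \<delta> \<le> g}\<close> and \<open>{k \<delta> < g}\<close>, both for \<open>\<phi>\<close> and for the integral; so the two can only
  differ by \<open>\<delta>\<close> times the measure of the shell in between.\<close>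

lemma layer_integral_close:
  assumes g: "CT g" and \<delta>: "0 < \<delta>"
  shows "\<bar>integral\<^sup>L \<mu> (\<lambda>x. layer \<delta> k (g x)) - \<phi> (\<lambda>x. layer \<delta> k (g x))\<bar>
           \<le> \<delta> * measure \<mu> {x\<in>\<Omega>. real k * \<delta> < g x \<and> g x < (real k + 1) * \<delta>}"
proof -
  define v where "v x = layer \<delta> k (g x)" for x
  define U where "U = {x\<in>\<Omega>. real k * \<delta> < g x}"
  define K where "K = {x\<in>\<Omega>. (real k + 1) * \<delta> \<le> g x}"
  have cv: "CT v" unfolding v_def layer_def by (intro continuous_intros g)
  have oU: "openin T U"
    unfolding U_def using openin_continuous_map_preimage[OF g, of "{real k * \<delta><..}"] by simp
  have cK: "closedin T K"
    unfolding K_def using closedin_continuous_map_preimage[OF g, of "{(real k + 1) * \<delta>..}"] by simp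
  have sets: "U \<in> borel_sets_of T" "K \<in> borel_sets_of T"
    using oU cK by (auto intro: borel_sets_of_openin borel_sets_of_closedin)
  have i1: "integral\<^sup>L \<mu> v \<le> \<delta> * measure \<mu> U"
    using \<delta> by (intro integral_indicator_le[OF radon_riesz_measure sets(1) integrable_riesz_measure[OF cv]])
      (auto simp: v_def U_def layer_def indicator_def)
  have i2: "\<delta> * measure \<mu> K \<le> integral\<^sup>L \<mu> v"
    using \<delta> by (intro integral_indicator_ge[OF radon_riesz_measure sets(2) integrable_riesz_measure[OF cv]])
      (auto simp: v_def K_def layer_def indicator_def algebra_simps)
  have cw: "CT (\<lambda>x. (1 / \<delta>) * v x)" by (intro continuous_map_real_mult_left cv)
  have pv: "\<phi> v = \<delta> * \<phi> (\<lambda>x. (1 / \<delta>) * v x)"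
    using homogeneous[OF cw, of \<delta>] \<delta> by simp
  have "(\<lambda>x. (1 / \<delta>) * v x) \<in> bump_funs T U"
    unfolding bump_funs_def using cw \<delta> by (auto simp: v_def U_def layer_def field_simps)
  then have p1: "\<phi> v \<le> \<delta> * measure \<mu> U"
    using le_riesz_open measure_riesz_measure[OF sets(1)] riesz_outer_open[OF oU] pv \<delta> by simp
  have "\<rho> K \<le> \<phi> (\<lambda>x. (1 / \<delta>) * v x)"
    using \<delta> by (intro riesz_outer_le_closedin[OF cK cw]) (auto simp: v_def K_def layer_def algebra_simps)
  then have p2: "\<delta> * measure \<mu> K \<le> \<phi> v" using measure_riesz_measure[OF sets(2)] pv \<delta> by simp
  have "K \<subseteq> U" unfolding K_def U_def using \<delta> by (auto simp: algebra_simps)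
  then have "measure \<mu> (U - K) = measure \<mu> U - measure \<mu> K"
    using sets by (intro finite_measure.finite_measure_Diff[OF finite_measure_riesz_measure])
      (auto simp: sets_riesz_measure)
  moreover have "U - K = {x\<in>\<Omega>. real k * \<delta> < g x \<and> g x < (real k + 1) * \<delta>}"
    unfolding U_def K_def by auto
  ultimately have "\<delta> * measure \<mu> {x\<in>\<Omega>. real k * \<delta> < g x \<and> g x < (real k + 1) * \<delta>}
      = \<delta> * measure \<mu> U - \<delta> * measure \<mu> K"
    by (simp add: right_diff_distrib)
  then show ?thesis using i1 i2 p1 p2 unfolding v_def abs_le_iff by linarith
qed

lemma sum_measure_shells:
  assumes g: "CT g" and \<delta>: "0 < \<delta>"
  shows "(\<Sum>k<N. measure \<mu> {x\<in>\<Omega>. real k * \<delta> < g x \<and> g x < (real k + 1) * \<delta>}) \<le> measure \<mu> \<Omega>"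
proof -
  define S where "S k = {x\<in>\<Omega>. real k * \<delta> < g x \<and> g x < (real k + 1) * \<delta>}" for k :: nat
  have "disjoint_family_on S {..<N}"
    unfolding disjoint_family_on_def
  proof (intro ballI impI)
    fix k k' :: nat assume "k \<noteq> k'"
    then have "real k + 1 \<le> real k' \<or> real k' + 1 \<le> real k" by linarith
    then have "(real k + 1) * \<delta> \<le> real k' * \<delta> \<or> (real k' + 1) * \<delta> \<le> real k * \<delta>"
      using \<delta> by (auto intro: mult_right_mono)
    then show "S k \<inter> S k' = {}" unfolding S_def by auto
  qed
  moreover have "openin T (S k)" for k
    unfolding S_def using openin_continuous_map_preimage[OF g, of "{real k * \<delta><..<(real k + 1) * \<delta>}"]
    by simp
  then have sets: "S k \<in> sets \<mu>" for k by (simp add: sets_riesz_measure borel_sets_of_openin)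
  ultimately have "(\<Sum>k<N. measure \<mu> (S k)) = measure \<mu> (\<Union>k<N. S k)"
    by (intro finite_measure.finite_measure_finite_Union[OF finite_measure_riesz_measure, symmetric]) auto
  also have "\<dots> \<le> measure \<mu> \<Omega>"
    using sets by (intro finite_measure.finite_measure_mono[OF finite_measure_riesz_measure])
      (auto simp: S_def sets_riesz_measure borel_sets_of_openin)
  finally show ?thesis unfolding S_def .
qed

lemma integral_riesz_measure_approx:
  assumes g: "CT g" and gN: "\<forall>x\<in>\<Omega>. 0 \<le> g x \<and> g x \<le> real N * \<delta>" and \<delta>: "0 < \<delta>"
  shows "\<bar>integral\<^sup>L \<mu> g - \<phi> g\<bar> \<le> \<delta> * measure \<mu> \<Omega>"
proof -
  define v where "v k x = layer \<delta> k (g x)" for k x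
  have cv: "CT (v k)" for k unfolding v_def layer_def by (intro continuous_intros g)
  have gsum: "\<forall>x\<in>\<Omega>. g x = (\<Sum>k<N. v k x)"
    using sum_layer gN \<delta> unfolding v_def by (simp add: min_absorb1)
  have "\<phi> g = (\<Sum>k<N. \<phi> (v k))"
    using cong[OF g _ gsum] sum[of "{..<N}" v] cv by (simp add: continuous_map_sum)
  moreover have "integral\<^sup>L \<mu> g = (\<Sum>k<N. integral\<^sup>L \<mu> (v k))"
  proof -
    have "integral\<^sup>L \<mu> g = integral\<^sup>L \<mu> (\<lambda>x. \<Sum>k<N. v k x)"
      by (rule Bochner_Integration.integral_cong) (use gsum space_riesz_measure in auto)
    also have "\<dots> = (\<Sum>k<N. integral\<^sup>L \<mu> (v k))"
      by (rule Bochner_Integration.integral_sum) (rule integrable_riesz_measure[OF cv])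
    finally show ?thesis .
  qed
  ultimately have "\<bar>integral\<^sup>L \<mu> g - \<phi> g\<bar> \<le> (\<Sum>k<N. \<bar>integral\<^sup>L \<mu> (v k) - \<phi> (v k)\<bar>)"
    by (simp add: sum_abs flip: sum_subtractf)
  also have "\<dots> \<le> (\<Sum>k<N. \<delta> * measure \<mu> {x\<in>\<Omega>. real k * \<delta> < g x \<and> g x < (real k + 1) * \<delta>})"
    unfolding v_def by (intro sum_mono layer_integral_close g \<delta>)
  also have "\<dots> \<le> \<delta> * measure \<mu> \<Omega>"
    using sum_measure_shells[OF g \<delta>] \<delta> by (simp add: mult_left_mono flip: sum_distrib_left)
  finally show ?thesis .
qed

theorem integral_riesz_measure:
  assumes g: "CT g"
  shows "integral\<^sup>L \<mu> g = \<phi> g"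
proof -
  obtain B where B: "\<forall>x\<in>\<Omega>. \<bar>g x\<bar> \<le> B" using continuous_map_real_bounded[OF compact g] by blast
  define g' where "g' x = g x + B" for x
  have cg': "CT g'" unfolding g'_def by (intro continuous_intros g)
  have "integral\<^sup>L \<mu> g' = integral\<^sup>L \<mu> g + integral\<^sup>L \<mu> (\<lambda>x. B)"
    unfolding g'_def using integrable_riesz_measure[OF g]
    by (intro Bochner_Integration.integral_add finite_measure.integrable_const[OF finite_measure_riesz_measure])
  then have "integral\<^sup>L \<mu> g' = integral\<^sup>L \<mu> g + B * measure \<mu> \<Omega>"
    by (simp add: space_riesz_measure)
  moreover have "\<phi> g' = \<phi> g + B * measure \<mu> \<Omega>"
    using additive[OF g, of "\<lambda>x. B"] const[of B] measure_riesz_measure[of \<Omega>] riesz_outer_open[of \<Omega>]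
      riesz_open_topspace
    unfolding g'_def by (simp add: borel_sets_of_openin)
  moreover have "\<bar>integral\<^sup>L \<mu> g' - \<phi> g'\<bar> \<le> 0 + \<delta> * measure \<mu> \<Omega>" if \<delta>: "0 < \<delta>" for \<delta>
  proof -
    define N where "N = nat \<lceil>2 * B / \<delta>\<rceil>"
    have "2 * B / \<delta> \<le> real N" unfolding N_def by linarith
    then have "2 * B \<le> real N * \<delta>" using \<delta> by (simp add: field_simps)
    then have "\<forall>x\<in>\<Omega>. 0 \<le> g' x \<and> g' x \<le> real N * \<delta>" using B unfolding g'_def by (auto simp: abs_le_iff)
    then have "\<bar>integral\<^sup>L \<mu> g' - \<phi> g'\<bar> \<le> \<delta> * measure \<mu> \<Omega>"
      by (rule integral_riesz_measure_approx[OF cg' _ \<delta>])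
    then show ?thesis by simp
  qed
  then have "\<bar>integral\<^sup>L \<mu> g' - \<phi> g'\<bar> \<le> 0" by (rule field_le_epsilon_mult) (simp_all add: measure_nonneg)
  ultimately show ?thesis by simp
qed

end

section \<open>The Hahn--Banach theorem for spaces of real functions\<close>

definition fun_plus :: "('b \<Rightarrow> real) \<Rightarrow> ('b \<Rightarrow> real) \<Rightarrow> 'b \<Rightarrow> real" where
  "fun_plus f g = (\<lambda>x. f x + g x)"

definition fun_scale :: "real \<Rightarrow> ('b \<Rightarrow> real) \<Rightarrow> 'b \<Rightarrow> real" where
  "fun_scale c f = (\<lambda>x. c * f x)"

lemma fun_plus_scale_simps [simp]:
  "fun_plus f (fun_scale 0 g) = f" "fun_plus (\<lambda>x. 0) g = g" "fun_scale c (\<lambda>x. 0) = (\<lambda>x. 0)"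
  "fun_scale 1 f = f"
  by (auto simp: fun_plus_def fun_scale_def)

locale sublinear_functional =
  fixes V :: "('b \<Rightarrow> real) set" and p :: "('b \<Rightarrow> real) \<Rightarrow> real"
  assumes zero_mem: "(\<lambda>x. 0) \<in> V"
    and plus_mem: "\<And>f g. f \<in> V \<Longrightarrow> g \<in> V \<Longrightarrow> fun_plus f g \<in> V"
    and scale_mem: "\<And>f c. f \<in> V \<Longrightarrow> fun_scale c f \<in> V"
    and subadditive: "\<And>f g. f \<in> V \<Longrightarrow> g \<in> V \<Longrightarrow> p (fun_plus f g) \<le> p f + p g"
    and pos_homogeneous: "\<And>f c. f \<in> V \<Longrightarrow> 0 < c \<Longrightarrow> p (fun_scale c f) = c * p f"
begin

lemma p_zero: "p (\<lambda>x. 0) = 0"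
  using pos_homogeneous[OF zero_mem, of 2] by simp

text \<open>Graphs of linear functionals on subspaces of \<open>V\<close> dominated by \<open>p\<close>.\<close>

definition dominated_graph :: "(('b \<Rightarrow> real) \<times> real) set \<Rightarrow> bool" where
  "dominated_graph H \<longleftrightarrow> (\<forall>a\<in>H. \<forall>b\<in>H. fst a = fst b \<longrightarrow> snd a = snd b) \<and>
     (\<forall>a\<in>H. fst a \<in> V \<and> snd a \<le> p (fst a)) \<and> ((\<lambda>x. 0), 0) \<in> H \<and>
     (\<forall>a\<in>H. \<forall>b\<in>H. (fun_plus (fst a) (fst b), snd a + snd b) \<in> H) \<and>
     (\<forall>a\<in>H. \<forall>c. (fun_scale c (fst a), c * snd a) \<in> H)"

definition graph_extend :: "(('b \<Rightarrow> real) \<times> real) set \<Rightarrow> ('b \<Rightarrow> real) \<Rightarrow> real \<Rightarrow> (('b \<Rightarrow> real) \<times> real) set" where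
  "graph_extend H x c = {(fun_plus (fst a) (fun_scale t x), snd a + t * c) | a t. a \<in> H}"

lemma dominated_graphD:
  assumes "dominated_graph H"
  shows "\<And>a b. a \<in> H \<Longrightarrow> b \<in> H \<Longrightarrow> fst a = fst b \<Longrightarrow> snd a = snd b"
    and "\<And>a. a \<in> H \<Longrightarrow> fst a \<in> V" and "\<And>a. a \<in> H \<Longrightarrow> snd a \<le> p (fst a)"
    and "((\<lambda>x. 0), 0) \<in> H"
    and "\<And>a b. a \<in> H \<Longrightarrow> b \<in> H \<Longrightarrow> (fun_plus (fst a) (fst b), snd a + snd b) \<in> H"
    and "\<And>a c. a \<in> H \<Longrightarrow> (fun_scale c (fst a), c * snd a) \<in> H"
  using assms unfolding dominated_graph_def by blast+

lemma subset_graph_extend: "H \<subseteq> graph_extend H x c"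
proof
  fix a assume "a \<in> H"
  then have "(fun_plus (fst a) (fun_scale 0 x), snd a + 0 * c) \<in> graph_extend H x c"
    unfolding graph_extend_def by blast
  then show "a \<in> graph_extend H x c" by simp
qed

lemma graph_extend_mem:
  assumes "dominated_graph H"
  shows "(x, c) \<in> graph_extend H x c"
proof -
  have "(fun_plus (\<lambda>x. 0) (fun_scale 1 x), 0 + 1 * c) \<in> graph_extend H x c"
    unfolding graph_extend_def using dominated_graphD(4)[OF assms] by force
  then show ?thesis by simp
qed

lemma graph_extend_unique:
  assumes H: "dominated_graph H" and xn: "x \<notin> fst ` H" and a: "a \<in> H" "b \<in> H"
    and eq: "fun_plus (fst a) (fun_scale t x) = fun_plus (fst b) (fun_scale t' x)"
  shows "fst a = fst b \<and> t = t'"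
proof -
  have eq': "fst a z + t * x z = fst b z + t' * x z" for z
    using fun_cong[OF eq, of z] by (simp add: fun_plus_def fun_scale_def)
  have tt: "t = t'"
  proof (rule ccontr)
    assume ne: "t \<noteq> t'"
    have "(fun_plus (fst b) (fun_scale (-1) (fst a)), snd b + (-1) * snd a) \<in> H"
      using dominated_graphD(5)[OF H a(2) dominated_graphD(6)[OF H a(1), of "-1"]] by simp
    from dominated_graphD(6)[OF H this, of "1 / (t - t')"]
    have "(fun_scale (1 / (t - t')) (fun_plus (fst b) (fun_scale (-1) (fst a))),
                (1 / (t - t')) * (snd b + (-1) * snd a)) \<in> H" by simp
    moreover have "fun_scale (1 / (t - t')) (fun_plus (fst b) (fun_scale (-1) (fst a))) = x"
    proof
      fix z
      have "(t - t') * x z = fst b z - fst a z" using eq'[of z] by (simp add: algebra_simps)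
      then show "fun_scale (1 / (t - t')) (fun_plus (fst b) (fun_scale (-1) (fst a))) z = x z"
        using ne by (simp add: fun_plus_def fun_scale_def field_simps)
    qed
    ultimately have "x \<in> fst ` H" by force
    then show False using xn by simp
  qed
  moreover have "fst a = fst b" using eq' tt by auto
  ultimately show ?thesis by simp
qed

text \<open>The value \<open>c\<close> chosen for the new direction \<open>x\<close> must satisfy the two inequalities below;
  they are exactly what is needed to dominate \<open>y + t c\<close> by \<open>p (f + t x)\<close> for \<open>t > 0\<close> and
  \<open>t < 0\<close> respectively.\<close>

lemma graph_extend_dominated:
  assumes H: "dominated_graph H" and x: "x \<in> V" and a: "a \<in> H"
    and lo: "\<forall>a\<in>H. snd a - p (fun_plus (fst a) (fun_scale (-1) x)) \<le> c"
    and up: "\<forall>a\<in>H. c \<le> p (fun_plus (fst a) x) - snd a"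
  shows "snd a + t * c \<le> p (fun_plus (fst a) (fun_scale t x))"
proof -
  consider "t = 0" | "t > 0" | "t < 0" by arith
  then show ?thesis
  proof cases
    case 1 then show ?thesis using dominated_graphD(3)[OF H a] by simp
  next
    case 2
    have m: "(fun_scale (1/t) (fst a), (1/t) * snd a) \<in> H" using dominated_graphD(6)[OF H a] .
    then have "c \<le> p (fun_plus (fun_scale (1/t) (fst a)) x) - (1/t) * snd a" using up by fastforce
    then have "t * c \<le> t * p (fun_plus (fun_scale (1/t) (fst a)) x) - snd a"
      using 2 by (simp add: field_simps)
    also have "t * p (fun_plus (fun_scale (1/t) (fst a)) x) = p (fun_scale t (fun_plus (fun_scale (1/t) (fst a)) x))"
      using 2 dominated_graphD(2)[OF H m] x by (intro pos_homogeneous[symmetric] plus_mem) auto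
    also have "fun_scale t (fun_plus (fun_scale (1/t) (fst a)) x) = fun_plus (fst a) (fun_scale t x)"
      using 2 by (auto simp: fun_plus_def fun_scale_def fun_eq_iff field_simps)
    finally show ?thesis by simp
  next
    case 3
    define r where "r = - t"
    have r: "0 < r" using 3 r_def by simp
    have m: "(fun_scale (1/r) (fst a), (1/r) * snd a) \<in> H" using dominated_graphD(6)[OF H a] .
    then have "(1/r) * snd a - p (fun_plus (fun_scale (1/r) (fst a)) (fun_scale (-1) x)) \<le> c"
      using lo by fastforce
    then have "snd a - r * p (fun_plus (fun_scale (1/r) (fst a)) (fun_scale (-1) x)) \<le> r * c"
      using r by (simp add: field_simps)
    also have "r * p (fun_plus (fun_scale (1/r) (fst a)) (fun_scale (-1) x))
        = p (fun_scale r (fun_plus (fun_scale (1/r) (fst a)) (fun_scale (-1) x)))"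
      using r dominated_graphD(2)[OF H m] x by (intro pos_homogeneous[symmetric] plus_mem) (auto intro: scale_mem)
    also have "fun_scale r (fun_plus (fun_scale (1/r) (fst a)) (fun_scale (-1) x)) = fun_plus (fst a) (fun_scale t x)"
      using r unfolding r_def by (auto simp: fun_plus_def fun_scale_def fun_eq_iff field_simps)
    finally show ?thesis by (simp add: r_def)
  qed
qed

lemma dominated_graph_extend:
  assumes H: "dominated_graph H" and x: "x \<in> V" and xn: "x \<notin> fst ` H"
    and lo: "\<forall>a\<in>H. snd a - p (fun_plus (fst a) (fun_scale (-1) x)) \<le> c"
    and up: "\<forall>a\<in>H. c \<le> p (fun_plus (fst a) x) - snd a"
  shows "dominated_graph (graph_extend H x c)"
  unfolding dominated_graph_def
proof (intro conjI ballI allI impI)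
  fix a b assume "a \<in> graph_extend H x c" "b \<in> graph_extend H x c" and eq: "fst a = fst b"
  then obtain a' t b' t' where a': "a' \<in> H" "a = (fun_plus (fst a') (fun_scale t x), snd a' + t * c)"
    and b': "b' \<in> H" "b = (fun_plus (fst b') (fun_scale t' x), snd b' + t' * c)"
    unfolding graph_extend_def by blast
  then have "fst a' = fst b' \<and> t = t'" using graph_extend_unique[OF H xn] eq by simp
  then show "snd a = snd b" using dominated_graphD(1)[OF H a'(1) b'(1)] a' b' by simp
next
  fix a assume "a \<in> graph_extend H x c"
  then obtain a' t where a': "a' \<in> H" "a = (fun_plus (fst a') (fun_scale t x), snd a' + t * c)"
    unfolding graph_extend_def by blast
  show "fst a \<in> V" using a' dominated_graphD(2)[OF H] plus_mem scale_mem x by simp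
  show "snd a \<le> p (fst a)" using graph_extend_dominated[OF H x a'(1) lo up] a' by simp
next
  show "((\<lambda>x. 0), 0) \<in> graph_extend H x c" using subset_graph_extend dominated_graphD(4)[OF H] by blast
next
  fix a b assume "a \<in> graph_extend H x c" "b \<in> graph_extend H x c"
  then obtain a' t b' t' where a': "a' \<in> H" "a = (fun_plus (fst a') (fun_scale t x), snd a' + t * c)"
    and b': "b' \<in> H" "b = (fun_plus (fst b') (fun_scale t' x), snd b' + t' * c)"
    unfolding graph_extend_def by blast
  have "(fun_plus (fun_plus (fst a') (fst b')) (fun_scale (t + t') x), (snd a' + snd b') + (t + t') * c)
      \<in> graph_extend H x c"
    unfolding graph_extend_def using dominated_graphD(5)[OF H a'(1) b'(1)] by force
  moreover have "fun_plus (fun_plus (fst a') (fst b')) (fun_scale (t + t') x) = fun_plus (fst a) (fst b)"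
    using a' b' by (auto simp: fun_plus_def fun_scale_def algebra_simps)
  ultimately show "(fun_plus (fst a) (fst b), snd a + snd b) \<in> graph_extend H x c"
    using a' b' by (simp add: algebra_simps)
next
  fix a d assume "a \<in> graph_extend H x c"
  then obtain a' t where a': "a' \<in> H" "a = (fun_plus (fst a') (fun_scale t x), snd a' + t * c)"
    unfolding graph_extend_def by blast
  have "(fun_plus (fun_scale d (fst a')) (fun_scale (d * t) x), d * snd a' + (d * t) * c) \<in> graph_extend H x c"
    unfolding graph_extend_def using dominated_graphD(6)[OF H a'(1)] by force
  moreover have "fun_plus (fun_scale d (fst a')) (fun_scale (d * t) x) = fun_scale d (fst a)"
    using a' by (auto simp: fun_plus_def fun_scale_def algebra_simps)
  ultimately show "(fun_scale d (fst a), d * snd a) \<in> graph_extend H x c"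
    using a' by (simp add: algebra_simps)
qed

lemma extension_value_exists:
  assumes H: "dominated_graph H" and x: "x \<in> V"
  shows "\<exists>c. (\<forall>a\<in>H. snd a - p (fun_plus (fst a) (fun_scale (-1) x)) \<le> c)
           \<and> (\<forall>a\<in>H. c \<le> p (fun_plus (fst a) x) - snd a)"
proof -
  have bnd: "snd a1 - p (fun_plus (fst a1) (fun_scale (-1) x)) \<le> p (fun_plus (fst a2) x) - snd a2"
    if a1: "a1 \<in> H" and a2: "a2 \<in> H" for a1 a2
  proof -
    have "snd a1 + snd a2 \<le> p (fun_plus (fst a1) (fst a2))"
      using dominated_graphD(3)[OF H dominated_graphD(5)[OF H a1 a2]] by simp
    also have "fun_plus (fst a1) (fst a2) = fun_plus (fun_plus (fst a1) (fun_scale (-1) x)) (fun_plus (fst a2) x)"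
      by (auto simp: fun_plus_def fun_scale_def)
    also have "p \<dots> \<le> p (fun_plus (fst a1) (fun_scale (-1) x)) + p (fun_plus (fst a2) x)"
      using dominated_graphD(2)[OF H a1] dominated_graphD(2)[OF H a2] x
      by (intro subadditive plus_mem scale_mem) auto
    finally show ?thesis by simp
  qed
  define S where "S = (\<lambda>a. snd a - p (fun_plus (fst a) (fun_scale (-1) x))) ` H"
  have H0: "((\<lambda>x. 0), 0) \<in> H" by (rule dominated_graphD(4)[OF H])
  have "S \<noteq> {}" using H0 unfolding S_def by blast
  moreover have "bdd_above S" unfolding S_def using bnd[OF _ H0] by (intro bdd_aboveI2) auto
  ultimately show ?thesis
  proof (intro exI[of _ "Sup S"] conjI ballI)
    fix a assume "a \<in> H"
    then show "snd a - p (fun_plus (fst a) (fun_scale (-1) x)) \<le> Sup S"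
      using \<open>bdd_above S\<close> unfolding S_def by (intro cSup_upper) auto
  next
    fix a assume "a \<in> H"
    then show "Sup S \<le> p (fun_plus (fst a) x) - snd a"
      using \<open>S \<noteq> {}\<close> bnd unfolding S_def by (intro cSup_least) auto
  qed
qed

lemma dominated_graph_Union:
  assumes C: "C \<noteq> {}" "\<forall>H\<in>C. dominated_graph H" "chain\<^sub>\<subseteq> C"
  shows "dominated_graph (\<Union>C)"
proof -
  have common: "\<exists>H\<in>C. a \<in> H \<and> b \<in> H" if "a \<in> \<Union>C" "b \<in> \<Union>C" for a b
    using that C(3) unfolding chain_subset_def by blast
  have gH: "dominated_graph H" if "H \<in> C" for H using C(2) that by blast
  show ?thesis unfolding dominated_graph_def
  proof (intro conjI ballI allI impI)
    fix a b assume ab: "a \<in> \<Union>C" "b \<in> \<Union>C" and eq: "fst a = fst b"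
    obtain H where H: "H \<in> C" "a \<in> H" "b \<in> H" using common[OF ab] by blast
    show "snd a = snd b" by (rule dominated_graphD(1)[OF gH[OF H(1)] H(2,3) eq])
  next
    fix a assume "a \<in> \<Union>C"
    then obtain H where H: "H \<in> C" "a \<in> H" by blast
    show "fst a \<in> V" by (rule dominated_graphD(2)[OF gH[OF H(1)] H(2)])
    show "snd a \<le> p (fst a)" by (rule dominated_graphD(3)[OF gH[OF H(1)] H(2)])
  next
    obtain H where H: "H \<in> C" using C(1) by blast
    show "((\<lambda>x. 0), 0) \<in> \<Union>C" using dominated_graphD(4)[OF gH[OF H]] H by blast
  next
    fix a b assume ab: "a \<in> \<Union>C" "b \<in> \<Union>C"
    obtain H where H: "H \<in> C" "a \<in> H" "b \<in> H" using common[OF ab] by blast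
    show "(fun_plus (fst a) (fst b), snd a + snd b) \<in> \<Union>C"
      using dominated_graphD(5)[OF gH[OF H(1)] H(2,3)] H(1) by blast
  next
    fix a c assume "a \<in> \<Union>C"
    then obtain H where H: "H \<in> C" "a \<in> H" by blast
    show "(fun_scale c (fst a), c * snd a) \<in> \<Union>C"
      using dominated_graphD(6)[OF gH[OF H(1)] H(2)] H(1) by blast
  qed
qed

text \<open>Zorn's lemma; a maximal graph not defined everywhere on \<open>V\<close> could be extended.\<close>

lemma maximal_dominated_graph:
  assumes H0: "dominated_graph H0"
  obtains H where "dominated_graph H" "H0 \<subseteq> H" "\<forall>f\<in>V. \<exists>y. (f, y) \<in> H"
proof -
  define A where "A = {H. dominated_graph H \<and> H0 \<subseteq> H}"
  have "\<forall>C\<in>chains A. \<exists>U\<in>A. \<forall>X\<in>C. X \<subseteq> U"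
  proof
    fix C assume C: "C \<in> chains A"
    show "\<exists>U\<in>A. \<forall>X\<in>C. X \<subseteq> U"
    proof (cases "C = {}")
      case True then show ?thesis using H0 A_def by auto
    next
      case False
      have "dominated_graph (\<Union>C)"
        using C False unfolding chains_def A_def by (intro dominated_graph_Union) auto
      moreover have "H0 \<subseteq> \<Union>C" using C False unfolding chains_def A_def by auto
      ultimately show ?thesis unfolding A_def by blast
    qed
  qed
  then obtain H where H: "H \<in> A" "\<forall>X\<in>A. H \<subseteq> X \<longrightarrow> X = H" using Zorn_Lemma2 by blast
  have gH: "dominated_graph H" and H0H: "H0 \<subseteq> H" using H(1) A_def by auto
  have "\<forall>f\<in>V. \<exists>y. (f, y) \<in> H"
  proof (rule ccontr)
    assume "\<not> (\<forall>f\<in>V. \<exists>y. (f, y) \<in> H)"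
    then obtain x where x: "x \<in> V" "\<forall>y. (x, y) \<notin> H" by blast
    have xn: "x \<notin> fst ` H"
    proof
      assume "x \<in> fst ` H"
      then obtain a where "a \<in> H" "x = fst a" by blast
      then show False using x(2) by (metis prod.collapse)
    qed
    obtain c where c: "\<forall>a\<in>H. snd a - p (fun_plus (fst a) (fun_scale (-1) x)) \<le> c"
      "\<forall>a\<in>H. c \<le> p (fun_plus (fst a) x) - snd a"
      using extension_value_exists[OF gH x(1)] by (elim exE conjE)
    have "dominated_graph (graph_extend H x c)" by (rule dominated_graph_extend[OF gH x(1) xn c])
    moreover have "H0 \<subseteq> graph_extend H x c" using H0H subset_graph_extend[of H x c] by (rule order_trans)
    ultimately have "graph_extend H x c \<in> A" unfolding A_def by blast
    then have "graph_extend H x c = H" using H(2) subset_graph_extend[of H x c] by blast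
    then show False using graph_extend_mem[OF gH, of x c] x(2) by simp
  qed
  then show ?thesis using that gH H0H by blast
qed

lemma dominated_graph_zero: "dominated_graph {((\<lambda>x. 0), 0)}"
  unfolding dominated_graph_def using zero_mem p_zero by auto

lemma dominated_graph_through:
  assumes f0: "f0 \<in> V"
  obtains H where "dominated_graph H" "(f0, p f0) \<in> H"
proof (cases "f0 = (\<lambda>x. 0)")
  case True
  then show ?thesis using that[OF dominated_graph_zero] p_zero by simp
next
  case False
  have "p (fun_plus (fun_scale (-1) f0) f0) \<le> p (fun_scale (-1) f0) + p f0"
    using f0 by (intro subadditive scale_mem)
  moreover have "fun_plus (fun_scale (-1) f0) f0 = (\<lambda>x. 0)" by (auto simp: fun_plus_def fun_scale_def)
  ultimately have "dominated_graph (graph_extend {((\<lambda>x. 0), 0)} f0 (p f0))"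
    using False p_zero by (intro dominated_graph_extend[OF dominated_graph_zero f0]) auto
  then show ?thesis by (rule that) (rule graph_extend_mem[OF dominated_graph_zero])
qed

theorem Hahn_Banach:
  assumes f0: "f0 \<in> V"
  obtains \<phi> where "\<forall>f\<in>V. \<forall>g\<in>V. \<phi> (fun_plus f g) = \<phi> f + \<phi> g" "\<forall>f\<in>V. \<forall>c. \<phi> (fun_scale c f) = c * \<phi> f"
    "\<forall>f\<in>V. \<phi> f \<le> p f" "\<phi> f0 = p f0"
proof -
  obtain H0 where H0: "dominated_graph H0" "(f0, p f0) \<in> H0" by (rule dominated_graph_through[OF f0])
  obtain H where H: "dominated_graph H" "H0 \<subseteq> H" "\<forall>f\<in>V. \<exists>y. (f, y) \<in> H"
    by (rule maximal_dominated_graph[OF H0(1)])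
  have unique: "y = y'" if "(f, y) \<in> H" "(f, y') \<in> H" for f y y'
    using dominated_graphD(1)[OF H(1) that] by simp
  define \<phi> where "\<phi> f = (THE y. (f, y) \<in> H)" for f
  have graph: "(f, \<phi> f) \<in> H" if f: "f \<in> V" for f
  proof -
    obtain y where y: "(f, y) \<in> H" using H(3) f by blast
    then have "(f, THE y. (f, y) \<in> H) \<in> H" by (rule theI[of "\<lambda>y. (f, y) \<in> H" y]) (rule unique[OF _ y])
    then show ?thesis unfolding \<phi>_def .
  qed
  show ?thesis
  proof (intro that ballI allI)
    fix f g assume f: "f \<in> V" and g: "g \<in> V"
    have "(fun_plus f g, \<phi> f + \<phi> g) \<in> H" using dominated_graphD(5)[OF H(1) graph[OF f] graph[OF g]] by simp
    then show "\<phi> (fun_plus f g) = \<phi> f + \<phi> g" using unique graph[OF plus_mem[OF f g]] by blast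
  next
    fix f c assume f: "f \<in> V"
    have "(fun_scale c f, c * \<phi> f) \<in> H" using dominated_graphD(6)[OF H(1) graph[OF f]] by simp
    then show "\<phi> (fun_scale c f) = c * \<phi> f" using unique graph[OF scale_mem[OF f]] by blast
  next
    fix f assume f: "f \<in> V"
    show "\<phi> f \<le> p f" using dominated_graphD(3)[OF H(1) graph[OF f]] by simp
  next
    show "\<phi> f0 = p f0" using H0(2) H(2) graph[OF f0] unique by blast
  qed
qed

end

section \<open>A lattice version of the Stone--Weierstrass theorem\<close>

lemma compactin_max_cover:
  fixes L :: "('b \<Rightarrow> real) set"
  assumes K: "compactin T K" and L: "L \<noteq> {}"
    and max: "\<And>h1 h2. h1 \<in> L \<Longrightarrow> h2 \<in> L \<Longrightarrow> (\<lambda>x. max (h1 x) (h2 x)) \<in> L"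
    and cont: "\<And>h. h \<in> L \<Longrightarrow> continuous_map T euclideanreal h"
    and F: "continuous_map T euclideanreal F"
    and above: "\<And>z. z \<in> K \<Longrightarrow> \<exists>h\<in>L. F z < h z"
  shows "\<exists>h\<in>L. \<forall>z\<in>K. F z < h z"
proof -
  obtain hz where hz: "\<And>z. z \<in> K \<Longrightarrow> hz z \<in> L \<and> F z < hz z z"
    using above by metis
  define W where "W z = {x \<in> topspace T. F x < hz z x}" for z
  have "openin T (W z)" if "z \<in> K" for z
  proof -
    have "continuous_map T euclideanreal (\<lambda>x. hz z x - F x)"
      using cont hz that F by (intro continuous_map_diff) auto
    from openin_continuous_map_preimage[OF this, of "{0<..}"] show ?thesis unfolding W_def by simp
  qed
  moreover have "K \<subseteq> \<Union>(W ` K)"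
    using hz compactin_subset_topspace[OF K] unfolding W_def by blast
  ultimately obtain F' where F': "finite F'" "F' \<subseteq> W ` K" "K \<subseteq> \<Union>F'"
    using K unfolding compactin_def by (metis (no_types, lifting) imageE)
  obtain Z where Z: "Z \<subseteq> K" "finite Z" "F' = W ` Z" using finite_subset_image[OF F'(1,2)] by blast
  have "\<exists>h\<in>L. \<forall>x. (\<exists>z\<in>Z. x \<in> W z) \<longrightarrow> F x < h x"
    using Z(2,1)
  proof (induction Z rule: finite_induct)
    case empty then show ?case using L by blast
  next
    case (insert z Z)
    then obtain h where h: "h \<in> L" "\<forall>x. (\<exists>z\<in>Z. x \<in> W z) \<longrightarrow> F x < h x" by auto
    have "hz z \<in> L" using hz insert by auto
    then show ?case
      using h by (intro bexI[of _ "\<lambda>x. max (hz z x) (h x)"] max) (auto simp: W_def)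
  qed
  moreover have "\<forall>x\<in>K. \<exists>z\<in>Z. x \<in> W z" using F'(3) Z(3) by auto
  ultimately show ?thesis by blast
qed

lemma compactin_min_cover:
  fixes L :: "('b \<Rightarrow> real) set"
  assumes K: "compactin T K" and L: "L \<noteq> {}"
    and min: "\<And>h1 h2. h1 \<in> L \<Longrightarrow> h2 \<in> L \<Longrightarrow> (\<lambda>x. min (h1 x) (h2 x)) \<in> L"
    and cont: "\<And>h. h \<in> L \<Longrightarrow> continuous_map T euclideanreal h"
    and F: "continuous_map T euclideanreal F"
    and below: "\<And>z. z \<in> K \<Longrightarrow> \<exists>h\<in>L. h z < F z"
  shows "\<exists>h\<in>L. \<forall>z\<in>K. h z < F z"
proof -
  define L' where "L' = (\<lambda>h x. - h x) ` L"
  have "\<exists>h\<in>L'. \<forall>z\<in>K. - F z < h z"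
  proof (rule compactin_max_cover[OF K])
    fix h1 h2 assume "h1 \<in> L'" "h2 \<in> L'"
    then obtain g1 g2 where "g1 \<in> L" "g2 \<in> L" "h1 = (\<lambda>x. - g1 x)" "h2 = (\<lambda>x. - g2 x)"
      unfolding L'_def by blast
    moreover have "(\<lambda>x. max (- g1 x) (- g2 x)) = (\<lambda>x. - min (g1 x) (g2 x))" by auto
    ultimately show "(\<lambda>x. max (h1 x) (h2 x)) \<in> L'" unfolding L'_def using min by auto
  next
    show "continuous_map T euclideanreal h" if "h \<in> L'" for h
      using that cont unfolding L'_def by (auto intro: continuous_map_minus)
  next
    show "\<exists>h\<in>L'. - F z < h z" if "z \<in> K" for z
      using below[OF that] unfolding L'_def by force
  qed (use L F L'_def in \<open>auto intro: continuous_map_minus\<close>)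
  then show ?thesis unfolding L'_def by force
qed

theorem lattice_Stone_Weierstrass:
  fixes L :: "('b \<Rightarrow> real) set"
  assumes T: "compact_space T" and L: "L \<noteq> {}"
    and max: "\<And>h1 h2. h1 \<in> L \<Longrightarrow> h2 \<in> L \<Longrightarrow> (\<lambda>x. max (h1 x) (h2 x)) \<in> L"
    and min: "\<And>h1 h2. h1 \<in> L \<Longrightarrow> h2 \<in> L \<Longrightarrow> (\<lambda>x. min (h1 x) (h2 x)) \<in> L"
    and cont: "\<And>h. h \<in> L \<Longrightarrow> continuous_map T euclideanreal h"
    and f: "continuous_map T euclideanreal f"
    and interp: "\<And>x y. x \<in> topspace T \<Longrightarrow> y \<in> topspace T \<Longrightarrow> \<exists>h\<in>L. h x = f x \<and> h y = f y"
    and \<epsilon>: "0 < \<epsilon>"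
  shows "\<exists>h\<in>L. \<forall>x\<in>topspace T. \<bar>h x - f x\<bar> < \<epsilon>"
proof -
  have K: "compactin T (topspace T)" using T compact_space_def by blast
  define L' where "L' = {h\<in>L. \<forall>z\<in>topspace T. f z - \<epsilon> < h z}"
  have "\<exists>h\<in>{h\<in>L. h x < f x + \<epsilon>}. \<forall>z\<in>topspace T. f z - \<epsilon> < h z" if x: "x \<in> topspace T" for x
  proof (rule compactin_max_cover[OF K])
    show "{h \<in> L. h x < f x + \<epsilon>} \<noteq> {}" using interp[OF x x] \<epsilon> by force
    show "\<exists>h\<in>{h\<in>L. h x < f x + \<epsilon>}. f z - \<epsilon> < h z" if "z \<in> topspace T" for z
      using interp[OF x that] \<epsilon> by force
  qed (use max cont f in \<open>auto intro: continuous_intros\<close>)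
  then have "\<exists>h\<in>L'. h x < f x + \<epsilon>" if "x \<in> topspace T" for x
    using that unfolding L'_def by blast
  moreover have "L' \<noteq> {}"
  proof (cases "topspace T = {}")
    case True then show ?thesis using L unfolding L'_def by auto
  next
    case False then show ?thesis using calculation by blast
  qed
  ultimately have "\<exists>h\<in>L'. \<forall>x\<in>topspace T. h x < f x + \<epsilon>"
    using min cont f unfolding L'_def
    by (intro compactin_min_cover[OF K]) (auto intro: continuous_intros)
  then obtain h where "h \<in> L" "\<forall>x\<in>topspace T. f x - \<epsilon> < h x \<and> h x < f x + \<epsilon>"
    unfolding L'_def by blast
  then show ?thesis by (intro bexI[of _ h]) (auto simp: abs_less_iff)
qed

section \<open>The cone \<open>G\<close> and its equivalence classes\<close>

lemma GsetI:
  assumes "continuous_map T euclideanreal g"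
    and "\<And>x u y. x \<in> M \<Longrightarrow> u \<in> M \<Longrightarrow> y \<in> M \<Longrightarrow> x \<noteq> u \<Longrightarrow> u \<noteq> y \<Longrightarrow> x \<noteq> y \<Longrightarrow>
      dist x y * g (e (x, y)) \<le> dist x u * g (e (x, u)) + dist u y * g (e (u, y))"
  shows "g \<in> Gset M T e"
  using assms unfolding Gset_def Cfun_def by blast

lemma GsetD:
  "g \<in> Gset M T e \<Longrightarrow> x \<in> M \<Longrightarrow> u \<in> M \<Longrightarrow> y \<in> M \<Longrightarrow> x \<noteq> u \<Longrightarrow> u \<noteq> y \<Longrightarrow> x \<noteq> y \<Longrightarrow>
   dist x y * g (e (x, y)) \<le> dist x u * g (e (x, u)) + dist u y * g (e (u, y))"
  unfolding Gset_def by blast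

lemma Gset_continuous: "g \<in> Gset M T e \<Longrightarrow> continuous_map T euclideanreal g"
  by (simp add: Gset_def Cfun_def)

lemma Gset_const: "0 \<le> c \<Longrightarrow> (\<lambda>x. c) \<in> Gset M T e"
proof (rule GsetI)
  fix x u y assume "0 \<le> c"
  then show "dist x y * c \<le> dist x u * c + dist u y * c"
    using dist_triangle[of x y u] by (metis distrib_right mult_right_mono)
qed simp

lemma Gset_add: "g1 \<in> Gset M T e \<Longrightarrow> g2 \<in> Gset M T e \<Longrightarrow> (\<lambda>x. g1 x + g2 x) \<in> Gset M T e"
proof (rule GsetI)
  assume g1: "g1 \<in> Gset M T e" and g2: "g2 \<in> Gset M T e"
  then show "continuous_map T euclideanreal (\<lambda>x. g1 x + g2 x)"
    by (intro continuous_map_add Gset_continuous)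
  fix x u y assume xuy: "x \<in> M" "u \<in> M" "y \<in> M" "x \<noteq> u" "u \<noteq> y" "x \<noteq> y"
  show "dist x y * (g1 (e (x, y)) + g2 (e (x, y)))
       \<le> dist x u * (g1 (e (x, u)) + g2 (e (x, u))) + dist u y * (g1 (e (u, y)) + g2 (e (u, y)))"
    using GsetD[OF g1 xuy] GsetD[OF g2 xuy] by (simp add: distrib_left)
qed

lemma Gset_scale: "g \<in> Gset M T e \<Longrightarrow> 0 \<le> c \<Longrightarrow> (\<lambda>x. c * g x) \<in> Gset M T e"
proof (rule GsetI)
  assume g: "g \<in> Gset M T e" and c: "0 \<le> c"
  then show "continuous_map T euclideanreal (\<lambda>x. c * g x)"
    by (intro continuous_map_real_mult_left Gset_continuous)
  fix x u y assume "x \<in> M" "u \<in> M" "y \<in> M" "x \<noteq> u" "u \<noteq> y" "x \<noteq> y"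
  then have "c * (dist x y * g (e (x, y))) \<le> c * (dist x u * g (e (x, u)) + dist u y * g (e (u, y)))"
    using c GsetD[OF g] by (intro mult_left_mono) auto
  then show "dist x y * (c * g (e (x, y))) \<le> dist x u * (c * g (e (x, u))) + dist u y * (c * g (e (u, y)))"
    by (simp add: algebra_simps)
qed

lemma Gset_max: "g1 \<in> Gset M T e \<Longrightarrow> g2 \<in> Gset M T e \<Longrightarrow> (\<lambda>x. max (g1 x) (g2 x)) \<in> Gset M T e"
proof (rule GsetI)
  assume g1: "g1 \<in> Gset M T e" and g2: "g2 \<in> Gset M T e"
  then show "continuous_map T euclideanreal (\<lambda>x. max (g1 x) (g2 x))"
    by (intro continuous_map_real_max Gset_continuous)
  fix x u y assume xuy: "x \<in> M" "u \<in> M" "y \<in> M" "x \<noteq> u" "u \<noteq> y" "x \<noteq> y"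
  have le: "dist x u * g (e (x, u)) + dist u y * g (e (u, y))
      \<le> dist x u * max (g1 (e (x, u))) (g2 (e (x, u))) + dist u y * max (g1 (e (u, y))) (g2 (e (u, y)))"
    if "g = g1 \<or> g = g2" for g
    using that by (intro add_mono mult_left_mono) auto
  show "dist x y * max (g1 (e (x, y))) (g2 (e (x, y)))
       \<le> dist x u * max (g1 (e (x, u))) (g2 (e (x, u))) + dist u y * max (g1 (e (u, y))) (g2 (e (u, y)))"
  proof (cases "g1 (e (x, y)) \<le> g2 (e (x, y))")
    case True then show ?thesis using GsetD[OF g2 xuy] le[of g2] by (simp add: max_def)
  next
    case False then show ?thesis using GsetD[OF g1 xuy] le[of g1] by (simp add: max_def)
  qed
qed

definition Gequiv_invariant :: "'a::metric_space set \<Rightarrow> 'b topology \<Rightarrow> ('a \<times> 'a \<Rightarrow> 'b) \<Rightarrow> ('b \<Rightarrow> real) \<Rightarrow> bool" where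
  "Gequiv_invariant M T e f \<longleftrightarrow> (\<forall>\<zeta>\<in>topspace T. \<forall>\<omega>\<in>topspace T. Gequiv M T e \<zeta> \<omega> \<longrightarrow> f \<zeta> = f \<omega>)"

lemma Gequiv_refl: "Gequiv M T e \<zeta> \<zeta>"
  by (simp add: Gequiv_def)

lemma Gequiv_sym: "Gequiv M T e \<zeta> \<omega> \<Longrightarrow> Gequiv M T e \<omega> \<zeta>"
  by (auto simp: Gequiv_def)

lemma qmap_eq_iff:
  assumes "\<omega> \<in> topspace T"
  shows "qmap M T e \<zeta> = qmap M T e \<omega> \<longleftrightarrow> Gequiv M T e \<zeta> \<omega>"
proof
  assume "qmap M T e \<zeta> = qmap M T e \<omega>"
  moreover have "\<omega> \<in> qmap M T e \<omega>" using assms by (simp add: qmap_def Gequiv_refl)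
  ultimately have "\<omega> \<in> qmap M T e \<zeta>" by simp
  then show "Gequiv M T e \<zeta> \<omega>" by (simp add: qmap_def)
next
  assume "Gequiv M T e \<zeta> \<omega>"
  then show "qmap M T e \<zeta> = qmap M T e \<omega>"
    unfolding qmap_def Gequiv_def by force
qed

lemma Gequiv_invariant_iff_qmap:
  "Gequiv_invariant M T e f \<longleftrightarrow>
     (\<forall>\<zeta>\<in>topspace T. \<forall>\<omega>\<in>topspace T. qmap M T e \<zeta> = qmap M T e \<omega> \<longrightarrow> f \<zeta> = f \<omega>)"
  unfolding Gequiv_invariant_def by (simp add: qmap_eq_iff)

lemma Gequiv_invariant_Gset: "g \<in> Gset M T e \<Longrightarrow> Gequiv_invariant M T e g"
  unfolding Gequiv_invariant_def Gequiv_def by blast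

lemma Gequiv_invariant_max_min:
  assumes "Gequiv_invariant M T e f" "Gequiv_invariant M T e g"
  shows "Gequiv_invariant M T e (\<lambda>x. max (f x) (g x))" "Gequiv_invariant M T e (\<lambda>x. min (f x) (g x))"
  using assms unfolding Gequiv_invariant_def by auto

definition Gdiff :: "'a::metric_space set \<Rightarrow> 'b topology \<Rightarrow> ('a \<times> 'a \<Rightarrow> 'b) \<Rightarrow> ('b \<Rightarrow> real) set" where
  "Gdiff M T e = {(\<lambda>x. g1 x - g2 x) | g1 g2. g1 \<in> Gset M T e \<and> g2 \<in> Gset M T e}"

lemma GdiffI: "g1 \<in> Gset M T e \<Longrightarrow> g2 \<in> Gset M T e \<Longrightarrow> (\<lambda>x. g1 x - g2 x) \<in> Gdiff M T e"
  unfolding Gdiff_def by blast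

lemma Gdiff_continuous: "h \<in> Gdiff M T e \<Longrightarrow> continuous_map T euclideanreal h"
  unfolding Gdiff_def using Gset_continuous by (auto intro!: continuous_map_diff)

lemma Gdiff_max_min:
  assumes "h1 \<in> Gdiff M T e" "h2 \<in> Gdiff M T e"
  shows "(\<lambda>x. max (h1 x) (h2 x)) \<in> Gdiff M T e" "(\<lambda>x. min (h1 x) (h2 x)) \<in> Gdiff M T e"
proof -
  obtain g1 g2 g3 g4 where g: "g1 \<in> Gset M T e" "g2 \<in> Gset M T e" "g3 \<in> Gset M T e" "g4 \<in> Gset M T e"
    "h1 = (\<lambda>x. g1 x - g2 x)" "h2 = (\<lambda>x. g3 x - g4 x)" using assms unfolding Gdiff_def by blast
  have G: "(\<lambda>x. max (g1 x + g4 x) (g3 x + g2 x)) \<in> Gset M T e"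
    "(\<lambda>x. g2 x + g4 x) \<in> Gset M T e" "(\<lambda>x. g1 x + g3 x) \<in> Gset M T e"
    using g by (simp_all add: Gset_max Gset_add)
  have "(\<lambda>x. max (h1 x) (h2 x)) = (\<lambda>x. max (g1 x + g4 x) (g3 x + g2 x) - (g2 x + g4 x))"
    using g(5,6) by (auto simp: fun_eq_iff max_def)
  then show "(\<lambda>x. max (h1 x) (h2 x)) \<in> Gdiff M T e" using GdiffI[OF G(1,2)] by simp
  have "(\<lambda>x. min (h1 x) (h2 x)) = (\<lambda>x. (g1 x + g3 x) - max (g1 x + g4 x) (g3 x + g2 x))"
    using g(5,6) by (auto simp: fun_eq_iff max_def min_def)
  then show "(\<lambda>x. min (h1 x) (h2 x)) \<in> Gdiff M T e" using GdiffI[OF G(3,1)] by simp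
qed

text \<open>Every affine function \<open>a + b g\<close> of some \<open>g \<in> G\<close> is a difference of elements of \<open>G\<close>;
  such functions interpolate an invariant function at any two points.\<close>

lemma Gdiff_interpolate:
  assumes f: "Gequiv_invariant M T e f" and x: "x \<in> topspace T" and y: "y \<in> topspace T"
  shows "\<exists>h\<in>Gdiff M T e. h x = f x \<and> h y = f y"
proof -
  have affine: "(\<lambda>z. a + b * g z) \<in> Gdiff M T e" if "g \<in> Gset M T e" for a b g
  proof -
    have "(\<lambda>z. (max a 0 + max b 0 * g z) - (max (- a) 0 + max (- b) 0 * g z)) \<in> Gdiff M T e"
      using that by (intro GdiffI Gset_add Gset_const Gset_scale) auto
    moreover have "(max a 0 + max b 0 * g z) - (max (- a) 0 + max (- b) 0 * g z) = a + b * g z" for z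
      by (simp add: max_def algebra_simps)
    ultimately show ?thesis by simp
  qed
  show ?thesis
  proof (cases "Gequiv M T e x y")
    case True
    then have "f x = f y" using f x y unfolding Gequiv_invariant_def by blast
    then show ?thesis using affine[OF Gset_const[of 0], of "f x" 0] by auto
  next
    case False
    then obtain g where g: "g \<in> Gset M T e" "g x \<noteq> g y" unfolding Gequiv_def by blast
    define b where "b = (f y - f x) / (g y - g x)"
    have "f x + b * (g y - g x) = f y" using g(2) unfolding b_def by simp
    moreover have "(f x - b * g x) + b * g y = f x + b * (g y - g x)" by (simp add: algebra_simps)
    ultimately show ?thesis
      using affine[OF g(1), of "f x - b * g x" b] by (intro bexI[of _ "\<lambda>z. (f x - b * g x) + b * g z"]) auto
  qed
qed

definition Gsaturation :: "'a::metric_space set \<Rightarrow> 'b topology \<Rightarrow> ('a \<times> 'a \<Rightarrow> 'b) \<Rightarrow> 'b set \<Rightarrow> 'b set" where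
  "Gsaturation M T e C = {\<zeta>\<in>topspace T. \<exists>\<omega>\<in>C. Gequiv M T e \<zeta> \<omega>}"

locale cone_setting =
  fixes M :: "'a::metric_space set" and T :: "'b topology" and e :: "'a \<times> 'a \<Rightarrow> 'b"
  assumes compact: "compact_space T" and Hausdorff: "Hausdorff_space T"
begin

abbreviation "\<Omega> \<equiv> topspace T"
abbreviation "G \<equiv> Gset M T e"
abbreviation "CT f \<equiv> continuous_map T euclideanreal f"
abbreviation "invariant f \<equiv> Gequiv_invariant M T e f"

lemma Gequiv_separation:
  assumes \<zeta>: "\<zeta> \<in> \<Omega>" and C: "closedin T C" and ne: "\<forall>\<omega>\<in>C. \<not> Gequiv M T e \<zeta> \<omega>"
  obtains u where "CT u" "invariant u" "u \<zeta> = 0" "\<forall>\<omega>\<in>C. 1 < u \<omega>"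
proof -
  have "\<exists>u\<in>{u. CT u \<and> invariant u \<and> u \<zeta> = 0}. \<forall>\<omega>\<in>C. 1 < u \<omega>"
  proof (rule compactin_max_cover)
    show "compactin T C" using C compact closedin_compact_space by blast
    have "(\<lambda>x. 0) \<in> {u. CT u \<and> invariant u \<and> u \<zeta> = 0}" by (simp add: Gequiv_invariant_def)
    then show "{u. CT u \<and> invariant u \<and> u \<zeta> = 0} \<noteq> {}" by blast
  next
    fix \<omega> assume "\<omega> \<in> C"
    then obtain g where g: "g \<in> G" "g \<zeta> \<noteq> g \<omega>" using ne unfolding Gequiv_def by blast
    define u where "u x = 2 * \<bar>g x - g \<zeta>\<bar> / \<bar>g \<omega> - g \<zeta>\<bar>" for x
    have "CT u" unfolding u_def using Gset_continuous[OF g(1)] g(2) by (intro continuous_intros) auto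
    moreover have "invariant u"
      using Gequiv_invariant_Gset[OF g(1)] unfolding u_def Gequiv_invariant_def by simp
    moreover have "u \<zeta> = 0" "1 < u \<omega>" using g(2) unfolding u_def by auto
    ultimately show "\<exists>u\<in>{u. CT u \<and> invariant u \<and> u \<zeta> = 0}. 1 < u \<omega>" by blast
  qed (auto intro: continuous_map_real_max Gequiv_invariant_max_min)
  then show ?thesis using that by blast
qed

lemma closedin_Gsaturation:
  assumes C: "closedin T C"
  shows "closedin T (Gsaturation M T e C)"
proof -
  have "\<exists>U. openin T U \<and> \<zeta> \<in> U \<and> U \<subseteq> \<Omega> - Gsaturation M T e C"
    if \<zeta>: "\<zeta> \<in> \<Omega> - Gsaturation M T e C" for \<zeta>
  proof -
    have "\<forall>\<omega>\<in>C. \<not> Gequiv M T e \<zeta> \<omega>" using \<zeta> unfolding Gsaturation_def by auto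
    then obtain u where u: "CT u" "invariant u" "u \<zeta> = 0" "\<forall>\<omega>\<in>C. 1 < u \<omega>"
      using Gequiv_separation[OF _ C] \<zeta> by blast
    define U where "U = {x\<in>\<Omega>. u x < 1}"
    have "openin T U" unfolding U_def using openin_continuous_map_preimage[OF u(1), of "{..<1}"] by simp
    moreover have "\<zeta> \<in> U" using \<zeta> u(3) unfolding U_def by auto
    moreover have "x \<notin> Gsaturation M T e C" if x: "x \<in> U" for x
    proof
      assume "x \<in> Gsaturation M T e C"
      then obtain \<omega> where "\<omega> \<in> C" "Gequiv M T e x \<omega>" unfolding Gsaturation_def by blast
      moreover have "\<omega> \<in> \<Omega>" using \<open>\<omega> \<in> C\<close> closedin_subset[OF C] by blast
      ultimately have "u x = u \<omega>" "1 < u \<omega>" using u(2,4) x unfolding Gequiv_invariant_def U_def by auto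
      then show False using x unfolding U_def by simp
    qed
    ultimately show ?thesis unfolding U_def by blast
  qed
  then have "openin T (\<Omega> - Gsaturation M T e C)" by (subst openin_subopen) blast
  then show ?thesis unfolding closedin_def Gsaturation_def by auto
qed

lemma Urysohn_Gequiv_invariant:
  assumes K: "closedin T K" and sat: "\<And>\<zeta> \<omega>. \<zeta> \<in> K \<Longrightarrow> \<omega> \<in> \<Omega> \<Longrightarrow> Gequiv M T e \<zeta> \<omega> \<Longrightarrow> \<omega> \<in> K"
    and V: "openin T V" and KV: "K \<subseteq> V"
  obtains h where "CT h" "invariant h" "\<forall>x\<in>\<Omega>. 0 \<le> h x \<and> h x \<le> 1" "\<forall>x\<in>K. h x = 1"
    "\<forall>x\<in>\<Omega> - V. h x = 0"
proof -
  have "\<exists>v\<in>{v. CT v \<and> invariant v \<and> (\<forall>\<omega>\<in>K. 1 < v \<omega>)}. \<forall>z\<in>\<Omega> - V. v z < 1/2"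
  proof (rule compactin_min_cover)
    show "compactin T (\<Omega> - V)" using V compact closedin_compact_space by blast
    have "(\<lambda>x. 2) \<in> {v. CT v \<and> invariant v \<and> (\<forall>\<omega>\<in>K. 1 < v \<omega>)}" by (simp add: Gequiv_invariant_def)
    then show "{v. CT v \<and> invariant v \<and> (\<forall>\<omega>\<in>K. 1 < v \<omega>)} \<noteq> {}" by blast
  next
    fix w assume w: "w \<in> \<Omega> - V"
    have "\<not> Gequiv M T e w \<omega>" if "\<omega> \<in> K" for \<omega>
    proof
      assume "Gequiv M T e w \<omega>"
      then have "w \<in> K" using sat[OF that] w Gequiv_sym[of M T e w \<omega>] by blast
      then show False using w KV by blast
    qed
    then have "\<forall>\<omega>\<in>K. \<not> Gequiv M T e w \<omega>" by blast
    then obtain u where "CT u" "invariant u" "u w = 0" "\<forall>\<omega>\<in>K. 1 < u \<omega>"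
      using Gequiv_separation[OF _ K] w by blast
    then show "\<exists>v\<in>{v. CT v \<and> invariant v \<and> (\<forall>\<omega>\<in>K. 1 < v \<omega>)}. v w < 1/2" by auto
  qed (auto intro: continuous_map_real_min Gequiv_invariant_max_min)
  then obtain v where v: "CT v" "invariant v" "\<forall>\<omega>\<in>K. 1 < v \<omega>" "\<forall>z\<in>\<Omega> - V. v z < 1/2" by blast
  show ?thesis
  proof
    show "CT (\<lambda>x. min 1 (max 0 (2 * v x - 1)))" using v(1) by (intro continuous_intros) auto
    show "invariant (\<lambda>x. min 1 (max 0 (2 * v x - 1)))" using v(2) by (simp add: Gequiv_invariant_def)
    show "\<forall>x\<in>\<Omega>. 0 \<le> min 1 (max 0 (2 * v x - 1)) \<and> min 1 (max 0 (2 * v x - 1)) \<le> 1" by simp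
    show "\<forall>x\<in>K. min 1 (max 0 (2 * v x - 1)) = 1" using v(3) by force
    show "\<forall>x\<in>\<Omega> - V. min 1 (max 0 (2 * v x - 1)) = 0" using v(4) by force
  qed
qed

end

lemma upper_G_int_mono:
  "\<forall>x\<in>topspace T. f x \<le> h x \<Longrightarrow> upper_G_int M T e \<mu> f \<le> upper_G_int M T e \<mu> h"
  unfolding upper_G_int_def by (rule Inf_superset_mono) force

lemma qmap_preimage_borel:
  assumes "A \<in> quot_borel_sets M T e"
  shows "{\<zeta>\<in>topspace T. qmap M T e \<zeta> \<in> A} \<in> borel_sets_of T"
  using assms unfolding quot_borel_sets_def
proof (induction rule: sigma_sets.induct)
  case (Basic a)
  then show ?case unfolding quot_open_sets_def by (intro borel_sets_of_openin) auto
next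
  case Empty
  show ?case unfolding borel_sets_of_def using sigma_sets.Empty by simp
next
  case (Compl a)
  have "{\<zeta>\<in>topspace T. qmap M T e \<zeta> \<in> quot_space M T e - a}
      = topspace T - {\<zeta>\<in>topspace T. qmap M T e \<zeta> \<in> a}"
    unfolding quot_space_def by auto
  then show ?case using borel_sets_of_Diff[OF Compl.IH] by simp
next
  case (Union a)
  have "{\<zeta>\<in>topspace T. qmap M T e \<zeta> \<in> (\<Union>i. a i)} = (\<Union>i. {\<zeta>\<in>topspace T. qmap M T e \<zeta> \<in> a i})" by auto
  then show ?case using Union.IH unfolding borel_sets_of_def by (simp add: sigma_sets.Union)
qed

lemma quot_space_borel: "quot_space M T e \<in> quot_borel_sets M T e"
  unfolding quot_borel_sets_def by (rule sigma_sets_top)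

lemma qmap_preimage_quot_space: "{\<zeta>\<in>topspace T. qmap M T e \<zeta> \<in> quot_space M T e} = topspace T"
  unfolding quot_space_def by auto

section \<open>Minimal measures\<close>

locale minimality_setting = cone_setting +
  fixes \<mu> :: "'b measure"
  assumes radon: "radon_measure T \<mu>"
begin

lemma integrable_continuous: "CT g \<Longrightarrow> integrable \<mu> g"
  by (rule integrable_continuous_map[OF radon compact])

lemma eintegral_continuous: "CT f \<Longrightarrow> eintegral \<mu> f = ereal (integral\<^sup>L \<mu> f)"
  using integrable_continuous unfolding eintegral_def by simp

lemma integral_eq_on_Gdiff:
  assumes \<nu>: "radon_measure T \<nu>" and eq: "\<forall>g\<in>G. integral\<^sup>L \<mu> g = integral\<^sup>L \<nu> g" and h: "h \<in> Gdiff M T e"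
  shows "integral\<^sup>L \<mu> h = integral\<^sup>L \<nu> h"
proof -
  obtain g1 g2 where g: "g1 \<in> G" "g2 \<in> G" "h = (\<lambda>x. g1 x - g2 x)" using h unfolding Gdiff_def by blast
  have "integral\<^sup>L \<mu> h = integral\<^sup>L \<mu> g1 - integral\<^sup>L \<mu> g2"
    unfolding g(3) using g(1,2) by (intro Bochner_Integration.integral_diff integrable_continuous Gset_continuous)
  also have "\<dots> = integral\<^sup>L \<nu> g1 - integral\<^sup>L \<nu> g2" using eq g by simp
  also have "\<dots> = integral\<^sup>L \<nu> h"
    unfolding g(3) using g(1,2)
    by (intro Bochner_Integration.integral_diff[symmetric] integrable_continuous_map[OF \<nu> compact] Gset_continuous)
  finally show ?thesis .
qed

text \<open>Two Radon measures which agree on \<open>G\<close> agree on \<open>G - G\<close>, which is dense in the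
  invariant continuous functions by the lattice Stone--Weierstrass theorem.\<close>

lemma integral_eq_if_eq_on_Gset:
  assumes \<nu>: "radon_measure T \<nu>" and eq: "\<forall>g\<in>G. integral\<^sup>L \<mu> g = integral\<^sup>L \<nu> g"
    and f: "CT f" and inv: "invariant f"
  shows "integral\<^sup>L \<mu> f = integral\<^sup>L \<nu> f"
proof -
  have close: "\<bar>integral\<^sup>L \<mu> f - integral\<^sup>L \<nu> f\<bar> \<le> 0 + \<epsilon> * (measure \<mu> \<Omega> + measure \<nu> \<Omega>)"
    if \<epsilon>: "0 < \<epsilon>" for \<epsilon>
  proof -
    have "(\<lambda>x. 0 - 0) \<in> Gdiff M T e" by (intro GdiffI Gset_const) simp_all
    then have ne: "Gdiff M T e \<noteq> {}" by blast
    have "\<exists>h\<in>Gdiff M T e. \<forall>x\<in>\<Omega>. \<bar>h x - f x\<bar> < \<epsilon>"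
      by (rule lattice_Stone_Weierstrass[OF compact ne _ _ _ f _ \<epsilon>])
        (simp_all add: Gdiff_max_min Gdiff_continuous Gdiff_interpolate[OF inv])
    then obtain h where h: "h \<in> Gdiff M T e" "\<forall>x\<in>\<Omega>. \<bar>h x - f x\<bar> < \<epsilon>" by blast
    have "\<bar>integral\<^sup>L \<mu> f - integral\<^sup>L \<mu> h\<bar> \<le> \<epsilon> * measure \<mu> \<Omega>"
      by (rule integral_uniformly_close[OF radon compact f Gdiff_continuous[OF h(1)] h(2)])
    moreover have "\<bar>integral\<^sup>L \<nu> f - integral\<^sup>L \<nu> h\<bar> \<le> \<epsilon> * measure \<nu> \<Omega>"
      by (rule integral_uniformly_close[OF \<nu> compact f Gdiff_continuous[OF h(1)] h(2)])
    moreover have "integral\<^sup>L \<mu> h = integral\<^sup>L \<nu> h" by (rule integral_eq_on_Gdiff[OF \<nu> eq h(1)])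
    ultimately show ?thesis by (simp add: distrib_left abs_le_iff)
  qed
  have "\<bar>integral\<^sup>L \<mu> f - integral\<^sup>L \<nu> f\<bar> \<le> 0"
    by (rule field_le_epsilon_mult[OF close]) (assumption, rule add_nonneg_nonneg[OF measure_nonneg measure_nonneg])
  then show ?thesis by simp
qed

definition upper_G :: "('b \<Rightarrow> real) \<Rightarrow> real" where
  "upper_G f = Inf {integral\<^sup>L \<mu> g | g. g \<in> G \<and> (\<forall>x\<in>\<Omega>. f x \<le> g x)}"

lemma upper_G_set:
  assumes f: "CT f"
  shows "{integral\<^sup>L \<mu> g | g. g \<in> G \<and> (\<forall>x\<in>\<Omega>. f x \<le> g x)} \<noteq> {}"
    and "bdd_below {integral\<^sup>L \<mu> g | g. g \<in> G \<and> (\<forall>x\<in>\<Omega>. f x \<le> g x)}"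
proof -
  obtain B where "\<forall>x\<in>\<Omega>. \<bar>f x\<bar> \<le> B" using continuous_map_real_bounded[OF compact f] by blast
  then have "\<forall>x\<in>\<Omega>. f x \<le> max B 0" by force
  moreover have "(\<lambda>x. max B 0) \<in> G" by (rule Gset_const) simp
  ultimately show "{integral\<^sup>L \<mu> g | g. g \<in> G \<and> (\<forall>x\<in>\<Omega>. f x \<le> g x)} \<noteq> {}" by blast
  show "bdd_below {integral\<^sup>L \<mu> g | g. g \<in> G \<and> (\<forall>x\<in>\<Omega>. f x \<le> g x)}"
  proof (rule bdd_belowI)
    fix r assume "r \<in> {integral\<^sup>L \<mu> g | g. g \<in> G \<and> (\<forall>x\<in>\<Omega>. f x \<le> g x)}"
    then obtain g where g: "g \<in> G" "\<forall>x\<in>\<Omega>. f x \<le> g x" "r = integral\<^sup>L \<mu> g" by blast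
    show "integral\<^sup>L \<mu> f \<le> r"
      using g radon_measureD(1)[OF radon]
      by (auto intro!: integral_mono integrable_continuous[OF f] integrable_continuous[OF Gset_continuous[OF g(1)]])
  qed
qed

lemma upper_G_le: "CT f \<Longrightarrow> g \<in> G \<Longrightarrow> \<forall>x\<in>\<Omega>. f x \<le> g x \<Longrightarrow> upper_G f \<le> integral\<^sup>L \<mu> g"
  unfolding upper_G_def by (rule cInf_lower) (auto intro: upper_G_set)

lemma upper_G_greatest:
  "CT f \<Longrightarrow> (\<And>g. g \<in> G \<Longrightarrow> \<forall>x\<in>\<Omega>. f x \<le> g x \<Longrightarrow> c \<le> integral\<^sup>L \<mu> g) \<Longrightarrow> c \<le> upper_G f"
  unfolding upper_G_def by (rule cInf_greatest) (auto dest: upper_G_set)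

lemma upper_G_int_eq: "CT f \<Longrightarrow> upper_G_int M T e \<mu> f = ereal (upper_G f)"
proof -
  assume f: "CT f"
  have "{ereal (integral\<^sup>L \<mu> g) | g. g \<in> G \<and> (\<forall>x\<in>\<Omega>. f x \<le> g x)}
      = ereal ` {integral\<^sup>L \<mu> g | g. g \<in> G \<and> (\<forall>x\<in>\<Omega>. f x \<le> g x)}" by blast
  then show ?thesis unfolding upper_G_int_def upper_G_def
    using ereal_Inf'[OF upper_G_set(2)[OF f] upper_G_set(1)[OF f]] by simp
qed

lemma upper_G_subadditive:
  assumes f1: "CT f1" and f2: "CT f2"
  shows "upper_G (fun_plus f1 f2) \<le> upper_G f1 + upper_G f2"
proof -
  have c: "CT (fun_plus f1 f2)" unfolding fun_plus_def using f1 f2 by (intro continuous_intros)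
  have "upper_G (fun_plus f1 f2) - upper_G f2 \<le> upper_G f1"
  proof (rule upper_G_greatest[OF f1])
    fix g1 assume g1: "g1 \<in> G" "\<forall>x\<in>\<Omega>. f1 x \<le> g1 x"
    have "upper_G (fun_plus f1 f2) - integral\<^sup>L \<mu> g1 \<le> upper_G f2"
    proof (rule upper_G_greatest[OF f2])
      fix g2 assume g2: "g2 \<in> G" "\<forall>x\<in>\<Omega>. f2 x \<le> g2 x"
      have "upper_G (fun_plus f1 f2) \<le> integral\<^sup>L \<mu> (\<lambda>x. g1 x + g2 x)"
        using g1 g2 by (intro upper_G_le[OF c Gset_add]) (auto simp: fun_plus_def intro!: add_mono)
      also have "\<dots> = integral\<^sup>L \<mu> g1 + integral\<^sup>L \<mu> g2"
        using g1 g2 by (intro Bochner_Integration.integral_add integrable_continuous Gset_continuous)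
      finally show "upper_G (fun_plus f1 f2) - integral\<^sup>L \<mu> g1 \<le> integral\<^sup>L \<mu> g2" by simp
    qed
    then show "upper_G (fun_plus f1 f2) - upper_G f2 \<le> integral\<^sup>L \<mu> g1" by simp
  qed
  then show ?thesis by simp
qed

lemma upper_G_pos_homogeneous:
  assumes f: "CT f" and c: "0 < c"
  shows "upper_G (fun_scale c f) = c * upper_G f"
proof -
  have cf: "CT (fun_scale c f)" unfolding fun_scale_def using f by (intro continuous_intros)
  have "upper_G (fun_scale c f) / c \<le> upper_G f"
  proof (rule upper_G_greatest[OF f])
    fix g assume g: "g \<in> G" "\<forall>x\<in>\<Omega>. f x \<le> g x"
    have "upper_G (fun_scale c f) \<le> integral\<^sup>L \<mu> (\<lambda>x. c * g x)"
      using g c by (intro upper_G_le[OF cf Gset_scale]) (auto simp: fun_scale_def)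
    then show "upper_G (fun_scale c f) / c \<le> integral\<^sup>L \<mu> g" using c by (simp add: field_simps)
  qed
  moreover have "c * upper_G f \<le> upper_G (fun_scale c f)"
  proof (rule upper_G_greatest[OF cf])
    fix g assume g: "g \<in> G" "\<forall>x\<in>\<Omega>. fun_scale c f x \<le> g x"
    have "upper_G f \<le> integral\<^sup>L \<mu> (\<lambda>x. (1/c) * g x)"
      using g c by (intro upper_G_le[OF f Gset_scale]) (auto simp: fun_scale_def field_simps)
    then show "c * upper_G f \<le> integral\<^sup>L \<mu> g" using c by (simp add: field_simps)
  qed
  ultimately show ?thesis using c by (simp add: field_simps)
qed

lemma integral_eq_upper_imp_minimal:
  assumes eq: "\<And>f. CT f \<Longrightarrow> invariant f \<Longrightarrow> ereal (integral\<^sup>L \<mu> f) = upper_G_int M T e \<mu> f"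
  shows "meas_minimal M T e \<mu>"
  unfolding meas_minimal_def meas_le_def
proof (intro allI impI ballI)
  fix \<nu> g assume "radon_measure T \<nu> \<and> (\<forall>g\<in>G. integral\<^sup>L \<nu> g \<le> integral\<^sup>L \<mu> g)" and g: "g \<in> G"
  then have \<nu>: "radon_measure T \<nu>" and le: "\<forall>g\<in>G. integral\<^sup>L \<nu> g \<le> integral\<^sup>L \<mu> g" by auto
  have cg: "CT g" by (rule Gset_continuous[OF g])
  then have cmg: "CT (\<lambda>x. - g x)" by (simp add: continuous_map_minus)
  have "invariant (\<lambda>x. - g x)" using Gequiv_invariant_Gset[OF g] by (simp add: Gequiv_invariant_def)
  then have "- integral\<^sup>L \<mu> g = upper_G (\<lambda>x. - g x)" using eq[OF cmg] upper_G_int_eq[OF cmg] by simp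
  moreover have "- integral\<^sup>L \<nu> g \<le> upper_G (\<lambda>x. - g x)"
  proof (rule upper_G_greatest[OF cmg])
    fix h assume h: "h \<in> G" "\<forall>x\<in>\<Omega>. - g x \<le> h x"
    have "0 \<le> integral\<^sup>L \<nu> (\<lambda>x. h x + g x)"
      using h radon_measureD(1)[OF \<nu>] by (intro Bochner_Integration.integral_nonneg) auto
    also have "\<dots> = integral\<^sup>L \<nu> h + integral\<^sup>L \<nu> g"
      using integrable_continuous_map[OF \<nu> compact Gset_continuous[OF h(1)]]
        integrable_continuous_map[OF \<nu> compact cg] by simp
    finally show "- integral\<^sup>L \<nu> g \<le> integral\<^sup>L \<mu> h" using le h(1) by fastforce
  qed
  ultimately show "integral\<^sup>L \<mu> g \<le> integral\<^sup>L \<nu> g" by simp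
qed

lemma sublinear_upper_G: "sublinear_functional {f. CT f} upper_G"
proof
  show "fun_plus f g \<in> {f. CT f}" if "f \<in> {f. CT f}" "g \<in> {f. CT f}" for f g
    using that unfolding fun_plus_def by (auto intro: continuous_map_add)
  show "fun_scale c f \<in> {f. CT f}" if "f \<in> {f. CT f}" for f c
    using that unfolding fun_scale_def by (auto intro: continuous_map_real_mult_left)
qed (simp_all add: upper_G_subadditive upper_G_pos_homogeneous)

text \<open>A Hahn--Banach extension of the value of the upper integral at \<open>f\<close> is a positive
  functional, hence integration against some Radon measure \<open>\<nu> \<preccurlyeq> \<mu>\<close>.\<close>

lemma exists_radon_below_upper_G:
  assumes f: "CT f"
  obtains \<nu> where "radon_measure T \<nu>" "meas_le M T e \<nu> \<mu>" "integral\<^sup>L \<nu> f = upper_G f"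
proof -
  obtain \<phi> where \<phi>: "\<forall>f\<in>{f. CT f}. \<forall>g\<in>{f. CT f}. \<phi> (fun_plus f g) = \<phi> f + \<phi> g"
    "\<forall>f\<in>{f. CT f}. \<forall>c. \<phi> (fun_scale c f) = c * \<phi> f" "\<forall>f\<in>{f. CT f}. \<phi> f \<le> upper_G f"
    "\<phi> f = upper_G f"
    using sublinear_functional.Hahn_Banach[OF sublinear_upper_G, of f] f by blast
  interpret R: positive_functional T \<phi>
  proof
    show "compact_space T" "Hausdorff_space T" by (fact compact, fact Hausdorff)
    show "\<phi> (\<lambda>x. f x + g x) = \<phi> f + \<phi> g" if "CT f" "CT g" for f g
      using \<phi>(1) that unfolding fun_plus_def by auto
    show "\<phi> (\<lambda>x. c * f x) = c * \<phi> f" if "CT f" for f c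
      using \<phi>(2) that unfolding fun_scale_def by auto
    show "0 \<le> \<phi> h" if h: "CT h" "\<forall>x\<in>\<Omega>. 0 \<le> h x" for h
    proof -
      have ch: "CT (fun_scale (-1) h)" unfolding fun_scale_def using h by (intro continuous_intros)
      have "- \<phi> h = \<phi> (fun_scale (-1) h)" using \<phi>(2) h by simp
      also have "\<dots> \<le> upper_G (fun_scale (-1) h)" using \<phi>(3) ch by blast
      also have "\<dots> \<le> integral\<^sup>L \<mu> (\<lambda>x. 0)"
        using h by (intro upper_G_le[OF ch Gset_const]) (auto simp: fun_scale_def)
      finally show ?thesis by simp
    qed
  qed
  show ?thesis
  proof (rule that[OF R.radon_riesz_measure])
    show "meas_le M T e (riesz_measure T \<phi>) \<mu>"
      unfolding meas_le_def
    proof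
      fix g assume g: "g \<in> G"
      have "integral\<^sup>L (riesz_measure T \<phi>) g = \<phi> g"
        using R.integral_riesz_measure Gset_continuous[OF g] by blast
      also have "\<dots> \<le> integral\<^sup>L \<mu> g"
        using \<phi>(3) Gset_continuous[OF g] upper_G_le[OF Gset_continuous[OF g] g] by fastforce
      finally show "integral\<^sup>L (riesz_measure T \<phi>) g \<le> integral\<^sup>L \<mu> g" .
    qed
    show "integral\<^sup>L (riesz_measure T \<phi>) f = upper_G f" using R.integral_riesz_measure[OF f] \<phi>(4) by simp
  qed
qed

lemma minimal_imp_integral_eq_upper:
  assumes minimal: "meas_minimal M T e \<mu>" and f: "CT f" and inv: "invariant f"
  shows "ereal (integral\<^sup>L \<mu> f) = upper_G_int M T e \<mu> f"
proof -
  obtain \<nu> where \<nu>: "radon_measure T \<nu>" "meas_le M T e \<nu> \<mu>" "integral\<^sup>L \<nu> f = upper_G f"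
    by (rule exists_radon_below_upper_G[OF f])
  then have "meas_le M T e \<mu> \<nu>" using minimal unfolding meas_minimal_def by blast
  with \<nu>(2) have "\<forall>g\<in>G. integral\<^sup>L \<mu> g = integral\<^sup>L \<nu> g" unfolding meas_le_def by (meson order_antisym)
  then have "integral\<^sup>L \<mu> f = integral\<^sup>L \<nu> f" by (rule integral_eq_if_eq_on_Gset[OF \<nu>(1) _ f inv])
  then show ?thesis using \<nu>(3) upper_G_int_eq[OF f] by simp
qed

lemma exists_invariant_above_closed:
  assumes K: "closedin T K" and sat: "\<And>\<zeta> \<omega>. \<zeta> \<in> K \<Longrightarrow> \<omega> \<in> \<Omega> \<Longrightarrow> Gequiv M T e \<zeta> \<omega> \<Longrightarrow> \<omega> \<in> K"
    and \<epsilon>: "0 < \<epsilon>"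
  obtains h where "CT h" "invariant h" "\<forall>x\<in>\<Omega>. 0 \<le> h x \<and> h x \<le> 1" "\<forall>x\<in>K. h x = 1"
    "integral\<^sup>L \<mu> h \<le> measure \<mu> K + \<epsilon>"
proof -
  obtain V where V: "openin T V" "K \<subseteq> V" "measure \<mu> V \<le> measure \<mu> K + \<epsilon>"
    using radon_measure_outer_regular[OF radon Hausdorff borel_sets_of_closedin[OF K] \<epsilon>] by blast
  obtain h where h: "CT h" "invariant h" "\<forall>x\<in>\<Omega>. 0 \<le> h x \<and> h x \<le> 1" "\<forall>x\<in>K. h x = 1"
    "\<forall>x\<in>\<Omega> - V. h x = 0"
    by (rule Urysohn_Gequiv_invariant[OF K sat V(1,2)])
  show ?thesis
  proof (rule that[OF h(1-4)])
    have "integral\<^sup>L \<mu> h \<le> 1 * measure \<mu> V"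
      using h(3,5)
      by (intro integral_indicator_le[OF radon borel_sets_of_openin[OF V(1)] integrable_continuous[OF h(1)]])
        (auto simp: indicator_def)
    then show "integral\<^sup>L \<mu> h \<le> measure \<mu> K + \<epsilon>" using V(3) by simp
  qed
qed

lemma integral_ge_sum_superlevel:
  assumes F: "usc_fun T F" and bnd: "\<forall>x\<in>\<Omega>. a \<le> F x" and \<delta>: "0 < \<delta>"
    and N: "\<forall>x\<in>\<Omega>. F x - a \<le> real N * \<delta>"
  shows "a * measure \<mu> \<Omega> + (\<Sum>k<N. \<delta> * measure \<mu> {x\<in>\<Omega>. a + real (Suc k) * \<delta> \<le> F x})
    \<le> integral\<^sup>L \<mu> F"
proof -
  note \<mu> = radon_measureD[OF radon]
  define K where "K k = {x\<in>\<Omega>. a + real (Suc k) * \<delta> \<le> F x}" for k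
  define lw where "lw x = a + (\<Sum>k<N. \<delta> * indicator (K k) x)" for x
  have KB: "K k \<in> sets \<mu>" for k
    unfolding K_def \<mu>(2) by (rule borel_sets_of_closedin[OF closedin_usc_fun_ge[OF F]])
  have int_K: "integrable \<mu> (\<lambda>x. \<delta> * indicator (K k) x)" for k
    using KB finite_measure.emeasure_finite[OF \<mu>(3)]
    by (intro integrable_mult_right integrable_real_indicator) (auto simp: top.not_eq_extremum)
  have const: "integrable \<mu> (\<lambda>x. a)" by (rule finite_measure.integrable_const[OF \<mu>(3)])
  have "integral\<^sup>L \<mu> lw = integral\<^sup>L \<mu> (\<lambda>x. a) + integral\<^sup>L \<mu> (\<lambda>x. \<Sum>k<N. \<delta> * indicator (K k) x)"
    unfolding lw_def
    by (rule Bochner_Integration.integral_add[OF const Bochner_Integration.integrable_sum[OF int_K]])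
  also have "integral\<^sup>L \<mu> (\<lambda>x. \<Sum>k<N. \<delta> * indicator (K k) x) = (\<Sum>k<N. integral\<^sup>L \<mu> (\<lambda>x. \<delta> * indicator (K k) x))"
    by (rule Bochner_Integration.integral_sum[OF int_K])
  also have "\<dots> = (\<Sum>k<N. \<delta> * measure \<mu> (K k))"
    using sets.sets_into_space[OF KB] by (intro sum.cong) (simp_all add: Int_absorb2)
  also have "integral\<^sup>L \<mu> (\<lambda>x. a) = a * measure \<mu> \<Omega>" using \<mu>(1) by simp
  finally have int_lw: "integral\<^sup>L \<mu> lw = a * measure \<mu> \<Omega> + (\<Sum>k<N. \<delta> * measure \<mu> (K k))" .
  have "lw x \<le> F x" if x: "x \<in> \<Omega>" for x
  proof -
    have "(\<Sum>k<N. \<delta> * indicator (K k) x) \<le> (\<Sum>k<N. layer \<delta> k (F x - a))"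
      using \<delta> by (intro sum_mono) (auto simp: K_def layer_def indicator_def algebra_simps)
    also have "\<dots> = F x - a" using sum_layer[of "F x - a" \<delta> N] x bnd N \<delta> by simp
    finally show ?thesis unfolding lw_def by simp
  qed
  moreover have "integrable \<mu> lw"
    unfolding lw_def using const int_K by (intro Bochner_Integration.integrable_add Bochner_Integration.integrable_sum)
  moreover have "integrable \<mu> F"
    using bnd N by (intro integrable_usc_fun[OF radon F, of a "a + real N * \<delta>"]) (auto simp: algebra_simps)
  ultimately have "integral\<^sup>L \<mu> lw \<le> integral\<^sup>L \<mu> F" using \<mu>(1) by (intro integral_mono) auto
  then show ?thesis using int_lw unfolding K_def by simp
qed

lemma exists_invariant_above_superlevels:
  assumes F: "usc_fun T F" and inv: "invariant F" and \<eta>: "0 < \<eta>"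
  obtains h where "\<And>k. CT (h k)" "\<And>k. invariant (h k)" "\<And>k. \<forall>x\<in>\<Omega>. 0 \<le> h k x \<and> h k x \<le> 1"
    "\<And>k. \<forall>x\<in>\<Omega>. c k \<le> F x \<longrightarrow> h k x = 1"
    "\<And>k. integral\<^sup>L \<mu> (h k) \<le> measure \<mu> {x\<in>\<Omega>. c k \<le> F x} + \<eta>"
proof -
  have "\<exists>h. CT h \<and> invariant h \<and> (\<forall>x\<in>\<Omega>. 0 \<le> h x \<and> h x \<le> 1) \<and> (\<forall>x\<in>\<Omega>. c k \<le> F x \<longrightarrow> h x = 1)
      \<and> integral\<^sup>L \<mu> h \<le> measure \<mu> {x\<in>\<Omega>. c k \<le> F x} + \<eta>" for k
  proof -
    have "\<omega> \<in> {x\<in>\<Omega>. c k \<le> F x}" if "\<zeta> \<in> {x\<in>\<Omega>. c k \<le> F x}" "\<omega> \<in> \<Omega>" "Gequiv M T e \<zeta> \<omega>" for \<zeta> \<omega>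
      using inv that unfolding Gequiv_invariant_def by auto
    then obtain h where "CT h" "invariant h" "\<forall>x\<in>\<Omega>. 0 \<le> h x \<and> h x \<le> 1"
      "\<forall>x\<in>{x\<in>\<Omega>. c k \<le> F x}. h x = 1" "integral\<^sup>L \<mu> h \<le> measure \<mu> {x\<in>\<Omega>. c k \<le> F x} + \<eta>"
      using exists_invariant_above_closed[OF closedin_usc_fun_ge[OF F] _ \<eta>] by blast
    then show ?thesis by auto
  qed
  then obtain h where "\<forall>k. CT (h k) \<and> invariant (h k) \<and> (\<forall>x\<in>\<Omega>. 0 \<le> h k x \<and> h k x \<le> 1)
      \<and> (\<forall>x\<in>\<Omega>. c k \<le> F x \<longrightarrow> h k x = 1) \<and> integral\<^sup>L \<mu> (h k) \<le> measure \<mu> {x\<in>\<Omega>. c k \<le> F x} + \<eta>"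
    using choice[of "\<lambda>k h. CT h \<and> invariant h \<and> (\<forall>x\<in>\<Omega>. 0 \<le> h x \<and> h x \<le> 1)
      \<and> (\<forall>x\<in>\<Omega>. c k \<le> F x \<longrightarrow> h x = 1) \<and> integral\<^sup>L \<mu> h \<le> measure \<mu> {x\<in>\<Omega>. c k \<le> F x} + \<eta>"]
    by blast
  then show ?thesis by (intro that) auto
qed

text \<open>Layer-cake approximation: with \<open>K k = {a + k \<delta> \<le> F}\<close> and invariant \<open>h\<^sub>k \<ge> 1\<^sub>K\<^sub>k\<close>
  with \<open>\<integral>h\<^sub>k \<le> \<mu>(K k) + \<eta>\<close>, the function \<open>a + \<Sum>k<N. \<delta> h\<^sub>k\<close> lies above \<open>F\<close>, while
  \<open>\<integral>F \<ge> a \<mu>(\<Omega>) + \<Sum>k<N. \<delta> \<mu>(K (k + 1))\<close>; the difference telescopes to at most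
  \<open>\<delta> \<mu>(\<Omega>) + N \<delta> \<eta>\<close>.\<close>

lemma exists_invariant_above_usc_bounded:
  assumes F: "usc_fun T F" and inv: "invariant F" and bnd: "\<forall>x\<in>\<Omega>. a \<le> F x \<and> F x \<le> b"
    and \<epsilon>: "0 < \<epsilon>"
  obtains h where "CT h" "invariant h" "\<forall>x\<in>\<Omega>. F x \<le> h x" "integral\<^sup>L \<mu> h \<le> integral\<^sup>L \<mu> F + \<epsilon>"
proof -
  define m0 where "m0 = measure \<mu> \<Omega>"
  define \<delta> where "\<delta> = \<epsilon> / (2 * (m0 + 1))"
  define N where "N = nat \<lceil>(b - a) / \<delta>\<rceil>"
  define \<eta> where "\<eta> = \<epsilon> / (2 * (real N * \<delta> + 1))"
  define K where "K k = {x\<in>\<Omega>. a + real k * \<delta> \<le> F x}" for k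
  have m0: "0 \<le> m0" unfolding m0_def by simp
  have \<delta>: "0 < \<delta>" "\<delta> * m0 \<le> \<epsilon> / 2" unfolding \<delta>_def using \<epsilon> m0 by (auto simp: field_simps)
  have \<eta>: "0 < \<eta>" "real N * \<delta> * \<eta> \<le> \<epsilon> / 2"
    unfolding \<eta>_def using \<epsilon> \<delta>(1) by (auto simp: field_simps add_pos_nonneg)
  have "(b - a) / \<delta> \<le> real N" unfolding N_def by linarith
  then have N: "\<forall>x\<in>\<Omega>. F x - a \<le> real N * \<delta>" using bnd \<delta>(1) by (force simp: field_simps)
  obtain hk where hk: "\<And>k. CT (hk k)" "\<And>k. invariant (hk k)" "\<And>k. \<forall>x\<in>\<Omega>. 0 \<le> hk k x \<and> hk k x \<le> 1"
    "\<And>k. \<forall>x\<in>\<Omega>. a + real k * \<delta> \<le> F x \<longrightarrow> hk k x = 1"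
    "\<And>k. integral\<^sup>L \<mu> (hk k) \<le> measure \<mu> (K k) + \<eta>"
    by (rule exists_invariant_above_superlevels[OF F inv \<eta>(1), where c = "\<lambda>k. a + real k * \<delta>"])
      (rule that; simp add: K_def)
  define h where "h x = a + (\<Sum>k<N. \<delta> * hk k x)" for x
  show ?thesis
  proof (rule that)
    show "CT h" unfolding h_def using hk(1) by (intro continuous_intros) auto
    show "invariant h" using hk(2) unfolding h_def Gequiv_invariant_def by simp
    have "F x - a \<le> (\<Sum>k<N. \<delta> * hk k x)" if "x \<in> \<Omega>" for x
      using hk(3,4) that bnd N \<delta>(1) by (intro le_sum_layer_weights) auto
    then show "\<forall>x\<in>\<Omega>. F x \<le> h x" unfolding h_def by force
    have "integral\<^sup>L \<mu> h = a * m0 + (\<Sum>k<N. \<delta> * integral\<^sup>L \<mu> (hk k))"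
      unfolding h_def m0_def using radon_measureD[OF radon] integrable_continuous[OF hk(1)]
      by (simp add: Bochner_Integration.integral_add Bochner_Integration.integral_sum
          finite_measure.integrable_const)
    also have "\<dots> \<le> a * m0 + (\<Sum>k<N. \<delta> * (measure \<mu> (K k) + \<eta>))"
      using hk(5) \<delta>(1) by (intro add_left_mono sum_mono mult_left_mono) auto
    also have "\<dots> = a * m0 + (\<Sum>k<N. \<delta> * measure \<mu> (K (Suc k)))
        + \<delta> * (\<Sum>k<N. measure \<mu> (K k) - measure \<mu> (K (Suc k))) + real N * \<delta> * \<eta>"
      by (simp add: sum_distrib_left sum_subtractf sum.distrib algebra_simps)
    also have "(\<Sum>k<N. measure \<mu> (K k) - measure \<mu> (K (Suc k))) \<le> m0"
    proof -
      have "measure \<mu> (K 0) \<le> m0" unfolding m0_def K_def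
        by (rule finite_measure.finite_measure_mono[OF radon_measureD(3)[OF radon]])
          (auto simp: radon_measureD(2)[OF radon] borel_sets_of_openin)
      then show ?thesis
        using sum_lessThan_telescope'[of "\<lambda>k. measure \<mu> (K k)" N] measure_nonneg[of \<mu> "K N"] by linarith
    qed
    also have "a * m0 + (\<Sum>k<N. \<delta> * measure \<mu> (K (Suc k))) \<le> integral\<^sup>L \<mu> F"
      using integral_ge_sum_superlevel[OF F _ \<delta>(1) N] bnd unfolding K_def m0_def by simp
    finally show "integral\<^sup>L \<mu> h \<le> integral\<^sup>L \<mu> F + \<epsilon>"
      using \<delta> \<eta> by (simp add: mult_left_mono)
  qed
qed

lemma exists_invariant_above_usc:
  assumes F: "usc_fun T F" and inv: "invariant F" and r: "eintegral \<mu> F < ereal r"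
  obtains h where "CT h" "invariant h" "\<forall>x\<in>\<Omega>. F x \<le> h x" "integral\<^sup>L \<mu> h < r"
proof -
  note \<mu> = radon_measureD[OF radon]
  obtain B where B: "\<forall>x\<in>\<Omega>. F x \<le> B" using usc_fun_bounded_above[OF compact F] by blast
  obtain m :: nat where m: "integral\<^sup>L \<mu> (\<lambda>x. max (F x) (B - real m)) < r"
    using integral_max_const_less[OF \<mu>(3) borel_measurable_usc_fun[OF radon F] _ r] B \<mu>(1) by auto
  define F' where "F' x = max (F x) (B - real m)" for x
  have m': "integral\<^sup>L \<mu> F' < r" using m unfolding F'_def .
  have "usc_fun T F'" unfolding F'_def by (rule usc_fun_max_const[OF F])
  moreover have "invariant F'" using inv unfolding F'_def Gequiv_invariant_def by simp
  moreover have "\<forall>x\<in>\<Omega>. B - real m \<le> F' x \<and> F' x \<le> B" using B unfolding F'_def by auto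
  moreover have "0 < (r - integral\<^sup>L \<mu> F') / 2" using m' by simp
  ultimately obtain h where h: "CT h" "invariant h" "\<forall>x\<in>\<Omega>. F' x \<le> h x"
    "integral\<^sup>L \<mu> h \<le> integral\<^sup>L \<mu> F' + (r - integral\<^sup>L \<mu> F') / 2"
    by (rule exists_invariant_above_usc_bounded)
  show ?thesis
  proof (rule that[OF h(1,2)])
    show "\<forall>x\<in>\<Omega>. F x \<le> h x" using h(3) unfolding F'_def by force
    show "integral\<^sup>L \<mu> h < r" using h(4) m' by (simp add: field_simps)
  qed
qed

lemma eintegral_le_upper_G_int:
  assumes f: "usc_fun T f"
  shows "eintegral \<mu> f \<le> upper_G_int M T e \<mu> f"
  unfolding upper_G_int_def
proof (rule Inf_greatest)
  fix z assume "z \<in> {ereal (integral\<^sup>L \<mu> g) |g. g \<in> G \<and> (\<forall>x\<in>\<Omega>. f x \<le> g x)}"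
  then obtain g where g: "g \<in> G" "\<forall>x\<in>\<Omega>. f x \<le> g x" "z = ereal (integral\<^sup>L \<mu> g)" by blast
  show "eintegral \<mu> f \<le> z"
  proof (cases "integrable \<mu> f")
    case True
    have "integral\<^sup>L \<mu> f \<le> integral\<^sup>L \<mu> g"
      using g radon_measureD(1)[OF radon]
      by (intro integral_mono[OF True integrable_continuous[OF Gset_continuous[OF g(1)]]]) auto
    then show ?thesis using True g(3) unfolding eintegral_def by simp
  qed (simp add: eintegral_def)
qed

lemma upper_G_int_le_eintegral:
  assumes eq: "\<And>f. CT f \<Longrightarrow> invariant f \<Longrightarrow> ereal (integral\<^sup>L \<mu> f) = upper_G_int M T e \<mu> f"
    and F: "usc_fun T F" and inv: "invariant F"
  shows "upper_G_int M T e \<mu> F \<le> eintegral \<mu> F"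
proof (rule dense_ge)
  fix z assume z: "eintegral \<mu> F < z"
  show "upper_G_int M T e \<mu> F \<le> z"
  proof (cases z)
    case (real r)
    then obtain h where h: "CT h" "invariant h" "\<forall>x\<in>\<Omega>. F x \<le> h x" "integral\<^sup>L \<mu> h < r"
      using exists_invariant_above_usc[OF F inv] z by blast
    have "upper_G_int M T e \<mu> F \<le> upper_G_int M T e \<mu> h" by (rule upper_G_int_mono[OF h(3)])
    also have "\<dots> = ereal (integral\<^sup>L \<mu> h)" using eq[OF h(1,2)] by simp
    also have "\<dots> \<le> z" using h(4) real by simp
    finally show ?thesis .
  qed (use z in auto)
qed

definition fibre_sup :: "('b \<Rightarrow> real) \<Rightarrow> 'b \<Rightarrow> real" where
  "fibre_sup f \<zeta> = Sup {f \<omega> | \<omega>. \<omega> \<in> \<Omega> \<and> Gequiv M T e \<zeta> \<omega>}"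

context
  fixes f assumes f: "usc_fun T f"
begin

lemma bdd_above_fibre: "bdd_above {f \<omega> | \<omega>. \<omega> \<in> \<Omega> \<and> Gequiv M T e \<zeta> \<omega>}"
  using usc_fun_bounded_above[OF compact f] by (auto intro: bdd_aboveI)

lemma le_fibre_sup: "\<omega> \<in> \<Omega> \<Longrightarrow> Gequiv M T e \<zeta> \<omega> \<Longrightarrow> f \<omega> \<le> fibre_sup f \<zeta>"
  unfolding fibre_sup_def by (rule cSup_upper[OF _ bdd_above_fibre]) auto

lemma fibre_sup_least:
  "\<zeta> \<in> \<Omega> \<Longrightarrow> (\<And>\<omega>. \<omega> \<in> \<Omega> \<Longrightarrow> Gequiv M T e \<zeta> \<omega> \<Longrightarrow> f \<omega> \<le> c) \<Longrightarrow> fibre_sup f \<zeta> \<le> c"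
  unfolding fibre_sup_def by (rule cSup_least) (auto intro: Gequiv_refl)

lemma invariant_fibre_sup: "invariant (fibre_sup f)"
  unfolding Gequiv_invariant_def
proof (intro ballI impI)
  fix \<zeta> \<omega> assume "Gequiv M T e \<zeta> \<omega>"
  then have "Gequiv M T e \<zeta> \<eta> \<longleftrightarrow> Gequiv M T e \<omega> \<eta>" for \<eta> unfolding Gequiv_def by force
  then show "fibre_sup f \<zeta> = fibre_sup f \<omega>" unfolding fibre_sup_def by simp
qed

text \<open>\<open>{fibre_sup f < a}\<close> is open: around a point where \<open>fibre_sup f < b < a\<close>, take the
  complement of the saturation of the closed set \<open>{b \<le> f}\<close>.\<close>

lemma usc_fun_fibre_sup: "usc_fun T (fibre_sup f)"
  unfolding usc_fun_def
proof (intro allI openin_subopen[THEN iffD2] ballI)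
  fix a \<zeta> assume \<zeta>: "\<zeta> \<in> {x \<in> \<Omega>. fibre_sup f x < a}"
  define b where "b = (fibre_sup f \<zeta> + a) / 2"
  have b: "fibre_sup f \<zeta> < b" "b < a" using \<zeta> unfolding b_def by auto
  define U where "U = \<Omega> - Gsaturation M T e {x\<in>\<Omega>. b \<le> f x}"
  have "openin T U" unfolding U_def using closedin_Gsaturation[OF closedin_usc_fun_ge[OF f]] by blast
  moreover have "\<zeta> \<notin> Gsaturation M T e {x\<in>\<Omega>. b \<le> f x}"
  proof
    assume "\<zeta> \<in> Gsaturation M T e {x\<in>\<Omega>. b \<le> f x}"
    then obtain \<omega> where "\<omega> \<in> \<Omega>" "b \<le> f \<omega>" "Gequiv M T e \<zeta> \<omega>" unfolding Gsaturation_def by blast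
    then show False using le_fibre_sup[of \<omega> \<zeta>] b(1) by simp
  qed
  then have "\<zeta> \<in> U" using \<zeta> unfolding U_def by blast
  moreover have "fibre_sup f x < a" if x: "x \<in> U" for x
  proof -
    have "fibre_sup f x \<le> b"
    proof (rule fibre_sup_least)
      show "x \<in> \<Omega>" using x unfolding U_def by blast
      fix \<omega> assume "\<omega> \<in> \<Omega>" "Gequiv M T e x \<omega>"
      then show "f \<omega> \<le> b" using x \<open>x \<in> \<Omega>\<close> unfolding U_def Gsaturation_def by force
    qed
    then show ?thesis using b(2) by simp
  qed
  then have "U \<subseteq> {x \<in> \<Omega>. fibre_sup f x < a}" unfolding U_def by blast
  ultimately show "\<exists>U. openin T U \<and> \<zeta> \<in> U \<and> U \<subseteq> {x \<in> \<Omega>. fibre_sup f x < a}" by blast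
qed

lemma upper_G_int_fibre_sup: "upper_G_int M T e \<mu> (fibre_sup f) = upper_G_int M T e \<mu> f"
proof -
  have "(\<forall>x\<in>\<Omega>. fibre_sup f x \<le> g x) \<longleftrightarrow> (\<forall>x\<in>\<Omega>. f x \<le> g x)" if g: "g \<in> G" for g
  proof
    assume "\<forall>x\<in>\<Omega>. fibre_sup f x \<le> g x"
    then show "\<forall>x\<in>\<Omega>. f x \<le> g x" using le_fibre_sup[OF _ Gequiv_refl] order_trans by blast
  next
    assume le: "\<forall>x\<in>\<Omega>. f x \<le> g x"
    show "\<forall>x\<in>\<Omega>. fibre_sup f x \<le> g x"
    proof
      fix x assume x: "x \<in> \<Omega>"
      show "fibre_sup f x \<le> g x"
      proof (rule fibre_sup_least[OF x])
        fix \<omega> assume "\<omega> \<in> \<Omega>" "Gequiv M T e x \<omega>"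
        then show "f \<omega> \<le> g x" using le g unfolding Gequiv_def by force
      qed
    qed
  qed
  then have "{ereal (integral\<^sup>L \<mu> g) | g. g \<in> G \<and> (\<forall>x\<in>\<Omega>. fibre_sup f x \<le> g x)}
      = {ereal (integral\<^sup>L \<mu> g) | g. g \<in> G \<and> (\<forall>x\<in>\<Omega>. f x \<le> g x)}" by blast
  then show ?thesis unfolding upper_G_int_def by simp
qed

end

text \<open>Condition (ii) implies (iv): on \<open>q\<^sup>-\<^sup>1(A)\<close> the function \<open>f\<close> agrees with its
  fibrewise supremum, which is upper semicontinuous and invariant.\<close>

lemma integral_eq_upper_imp_usc:
  assumes eq: "\<And>f. CT f \<Longrightarrow> invariant f \<Longrightarrow> ereal (integral\<^sup>L \<mu> f) = upper_G_int M T e \<mu> f"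
    and A: "A \<in> quot_borel_sets M T e" and null: "emeasure \<mu> (\<Omega> - {\<zeta>\<in>\<Omega>. qmap M T e \<zeta> \<in> A}) = 0"
    and f: "usc_fun T f"
    and fib: "\<forall>\<zeta>\<in>\<Omega>. \<forall>\<omega>\<in>\<Omega>. qmap M T e \<zeta> \<in> A \<and> qmap M T e \<zeta> = qmap M T e \<omega> \<longrightarrow> f \<zeta> = f \<omega>"
  shows "eintegral \<mu> f = upper_G_int M T e \<mu> f"
proof -
  note \<mu> = radon_measureD[OF radon]
  have fs: "fibre_sup f \<zeta> = f \<zeta>" if \<zeta>: "\<zeta> \<in> \<Omega>" "qmap M T e \<zeta> \<in> A" for \<zeta>
  proof (rule antisym)
    show "fibre_sup f \<zeta> \<le> f \<zeta>"
    proof (rule fibre_sup_least[OF f \<zeta>(1)])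
      fix \<omega> assume \<omega>: "\<omega> \<in> \<Omega>" "Gequiv M T e \<zeta> \<omega>"
      then have "qmap M T e \<zeta> = qmap M T e \<omega>" by (simp add: qmap_eq_iff)
      then have "f \<zeta> = f \<omega>" using fib \<zeta> \<omega>(1) by blast
      then show "f \<omega> \<le> f \<zeta>" by simp
    qed
    show "f \<zeta> \<le> fibre_sup f \<zeta>" by (rule le_fibre_sup[OF f \<zeta>(1) Gequiv_refl])
  qed
  have "\<Omega> - {\<zeta>\<in>\<Omega>. qmap M T e \<zeta> \<in> A} \<in> null_sets \<mu>"
    using null borel_sets_of_Diff[OF qmap_preimage_borel[OF A]] \<mu>(2) by (intro null_setsI) auto
  moreover have "{x\<in>space \<mu>. f x \<noteq> fibre_sup f x} \<subseteq> \<Omega> - {\<zeta>\<in>\<Omega>. qmap M T e \<zeta> \<in> A}"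
    using fs \<mu>(1) by force
  ultimately have "AE x in \<mu>. f x = fibre_sup f x" by (rule AE_I')
  with borel_measurable_usc_fun[OF radon f] borel_measurable_usc_fun[OF radon usc_fun_fibre_sup[OF f]]
  have "eintegral \<mu> f = eintegral \<mu> (fibre_sup f)" by (rule eintegral_cong_AE)
  also have "\<dots> = upper_G_int M T e \<mu> (fibre_sup f)"
    using eintegral_le_upper_G_int[OF usc_fun_fibre_sup[OF f]]
      upper_G_int_le_eintegral[OF eq usc_fun_fibre_sup[OF f] invariant_fibre_sup[OF f]] by (rule antisym)
  finally show ?thesis using upper_G_int_fibre_sup[OF f] by simp
qed

end

theorem theorem4p1:
  fixes M :: "'a::metric_space set" and x0 :: 'a
    and T :: "'b topology" and e :: "'a \<times> 'a \<Rightarrow> 'b" and \<mu> :: "'b measure"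
  assumes complete: "complete M"
    and pointed: "x0 \<in> M"
    and three: "\<exists>x\<in>M. \<exists>y\<in>M. \<exists>z\<in>M. x \<noteq> y \<and> y \<noteq> z \<and> x \<noteq> z"
    and beta: "stone_cech (subtopology euclidean (Mtilde M)) T e"
    and radon: "radon_measure T \<mu>"
  shows
   "(meas_minimal M T e \<mu> \<longleftrightarrow>
      (\<forall>f\<in>Cfun T. (\<forall>\<zeta>\<in>topspace T. \<forall>\<omega>\<in>topspace T. qmap M T e \<zeta> = qmap M T e \<omega> \<longrightarrow> f \<zeta> = f \<omega>) \<longrightarrow>
          ereal (integral\<^sup>L \<mu> f) = upper_G_int M T e \<mu> f))
  \<and> (meas_minimal M T e \<mu> \<longleftrightarrow>
      (\<forall>f. usc_fun T f \<and> (\<forall>\<zeta>\<in>topspace T. \<forall>\<omega>\<in>topspace T. qmap M T e \<zeta> = qmap M T e \<omega> \<longrightarrow> f \<zeta> = f \<omega>) \<longrightarrow>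
          eintegral \<mu> f = upper_G_int M T e \<mu> f))
  \<and> (meas_minimal M T e \<mu> \<longleftrightarrow>
      (\<forall>A\<in>quot_borel_sets M T e.
         emeasure \<mu> (topspace T - {\<zeta> \<in> topspace T. qmap M T e \<zeta> \<in> A}) = 0 \<longrightarrow>
         (\<forall>f. usc_fun T f \<and>
              (\<forall>\<zeta>\<in>topspace T. \<forall>\<omega>\<in>topspace T.
                  qmap M T e \<zeta> \<in> A \<and> qmap M T e \<zeta> = qmap M T e \<omega> \<longrightarrow> f \<zeta> = f \<omega>) \<longrightarrow>
            eintegral \<mu> f = upper_G_int M T e \<mu> f)))"
proof -
  interpret minimality_setting M T e \<mu>
    using beta radon unfolding stone_cech_def by unfold_locales auto
  let ?ii = "\<forall>f. CT f \<longrightarrow> invariant f \<longrightarrow> ereal (integral\<^sup>L \<mu> f) = upper_G_int M T e \<mu> f"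
  let ?iii = "\<forall>f. usc_fun T f \<and> invariant f \<longrightarrow> eintegral \<mu> f = upper_G_int M T e \<mu> f"
  let ?iv = "\<forall>A\<in>quot_borel_sets M T e. emeasure \<mu> (\<Omega> - {\<zeta> \<in> \<Omega>. qmap M T e \<zeta> \<in> A}) = 0 \<longrightarrow>
    (\<forall>f. usc_fun T f \<and> (\<forall>\<zeta>\<in>\<Omega>. \<forall>\<omega>\<in>\<Omega>. qmap M T e \<zeta> \<in> A \<and> qmap M T e \<zeta> = qmap M T e \<omega> \<longrightarrow> f \<zeta> = f \<omega>)
      \<longrightarrow> eintegral \<mu> f = upper_G_int M T e \<mu> f)"
  have "meas_minimal M T e \<mu> \<longleftrightarrow> ?ii"
    using minimal_imp_integral_eq_upper integral_eq_upper_imp_minimal by blast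
  moreover have "?ii \<Longrightarrow> ?iv" using integral_eq_upper_imp_usc by blast
  moreover have "?iv \<Longrightarrow> ?iii"
  proof (intro allI impI)
    fix f assume iv: ?iv and f: "usc_fun T f \<and> invariant f"
    have "emeasure \<mu> (\<Omega> - {\<zeta> \<in> \<Omega>. qmap M T e \<zeta> \<in> quot_space M T e}) = 0"
      by (simp add: qmap_preimage_quot_space)
    then show "eintegral \<mu> f = upper_G_int M T e \<mu> f"
      using iv quot_space_borel f unfolding Gequiv_invariant_iff_qmap by blast
  qed
  moreover have "?iii \<Longrightarrow> ?ii"
  proof (intro allI impI)
    fix f assume iii: ?iii and f: "CT f" "invariant f"
    then have "eintegral \<mu> f = upper_G_int M T e \<mu> f" using usc_fun_continuous_map by blast
    then show "ereal (integral\<^sup>L \<mu> f) = upper_G_int M T e \<mu> f" using eintegral_continuous[OF f(1)] by simp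
  qed
  ultimately show ?thesis unfolding Cfun_def Ball_def mem_Collect_eq Gequiv_invariant_iff_qmap by argo
qed

end
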